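(* Let $Z$ be a fat point scheme in $\mathbb{P}^1\times\mathbb{P}^1$ and set $c_{i,j}=\Delta H_Z(i,j)$. Then (i) for every $0\le j\le|\beta_Z|-1$, $\alpha^*_{j+1}=\sum_{h=0}^{|\alpha_Z|-1}c_{h,j}$, where $\alpha^*_{j+1}$ is the $(j+1)$-th entry of $\alpha_Z^*$ (taken to be $0$ if $\alpha_Z^*$ is shorter); (ii) for every $0\le i\le|\alpha_Z|-1$, $\beta^*_{i+1}=\sum_{h=0}^{|\beta_Z|-1}c_{i,h}$, where $\beta^*_{i+1}$ is the $(i+1)$-th entry of $\beta_Z^*$ (taken to be $0$ if $\beta_Z^*$ is shorter).
   Context: $\mathbf{k}$ algebraically closed, $R=\mathbf{k}[x_0,x_1,y_0,y_1]$ bigraded with $\deg x_i=(1,0)$, $\deg y_i=(0,1)$; a fat point scheme $Z$ has ideal $I_Z=\bigcap\wp_{P_i}^{m_i}$ and Hilbert function $H_Z(i,j)=\dim_{\mathbf{k}}(R/I_Z)_{(i,j)}$; $\Delta H_Z(i,j)=H_Z(i,j)-H_Z(i-1,j)-H_Z(i,j-1)+H_Z(i-1,j-1)$ with $H_Z=0$ outside $\mathbb{N}^2$. With $\pi_1(\mathrm{Supp}\,Z)=\{R_1,\dots,R_r\}$, $\pi_2(\mathrm{Supp}\,Z)=\{Q_1,\dots,Q_t\}$ and $m_{ij}$ the multiplicity of $R_i\times Q_j$ ($0$ if absent): $l_i=\max_j m_{ij}$, $a_{i,k}=\sum_j(m_{ij}-k)_+$ ($0\le k\le l_i-1$), $\alpha_Z$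 = all $a_{i,k}$ in non-increasing order; $l'_j=\max_i m_{ij}$, $b_{j,k}=\sum_i(m_{ij}-k)_+$ ($0\le k\le l'_j-1$), $\beta_Z$ = all $b_{j,k}$ in non-increasing order; $(n)_+=\max\{0,n\}$. The conjugate of a partition $\lambda$ is $\lambda^*$ with $\lambda^*_i=\#\{j:\lambda_j\ge i\}$, $i=1,\dots,\lambda_1$. *)

theory Defs
  imports "HOL-Library.Poly_Mapping" "HOL-Computational_Algebra.Polynomial"
begin

text \<open>The four variables of R = k[x0,x1,y0,y1]; deg x_i = (1,0), deg y_i = (0,1).\<close>
datatype var = X0 | X1 | Y0 | Y1

type_synonym 'k bipoly = "(var \<Rightarrow>\<^sub>0 nat) \<Rightarrow>\<^sub>0 'k"

definition pvar :: "var \<Rightarrow> 'k::comm_ring_1 bipoly" where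
  "pvar v = Poly_Mapping.single (Poly_Mapping.single v 1) 1"

definition pconst :: "'k::comm_ring_1 \<Rightarrow> 'k bipoly" where
  "pconst c = Poly_Mapping.single 0 c"

definition pscale :: "'k::comm_ring_1 \<Rightarrow> 'k bipoly \<Rightarrow> 'k bipoly" where
  "pscale c p = pconst c * p"

definition bihom :: "nat \<Rightarrow> nat \<Rightarrow> 'k::comm_ring_1 bipoly set" where
  "bihom i j = {p. \<forall>mon \<in> Poly_Mapping.keys p. Poly_Mapping.lookup mon X0 + Poly_Mapping.lookup mon X1 = i \<and> Poly_Mapping.lookup mon Y0 + Poly_Mapping.lookup mon Y1 = j}"

definition ideal_gen :: "'k::comm_ring_1 bipoly set \<Rightarrow> 'k bipoly set" where
  "ideal_gen S = {p. \<exists>F c. finite F \<and> F \<subseteq> S \<and> p = (\<Sum>f\<in>F. c f * f)}"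

definition ideal_pow :: "'k::comm_ring_1 bipoly set \<Rightarrow> nat \<Rightarrow> 'k bipoly set" where
  "ideal_pow I m = ideal_gen {prod_list xs | xs. length xs = m \<and> set xs \<subseteq> I}"

text \<open>Ideal of the point [a0:a1] x [b0:b1] of P^1 x P^1.\<close>
definition point_ideal :: "'k::comm_ring_1 \<times> 'k \<Rightarrow> 'k \<times> 'k \<Rightarrow> 'k bipoly set" where
  "point_ideal A B = ideal_gen
     {pconst (snd A) * pvar X0 - pconst (fst A) * pvar X1,
      pconst (snd B) * pvar Y0 - pconst (fst B) * pvar Y1}"

text \<open>Points of P^1: nonzero pairs; two pairs give distinct points iff not proportional.\<close>
definition proj_pt :: "'k::field \<times> 'k \<Rightarrow> bool" where
  "proj_pt A \<longleftrightarrow> A \<noteq> (0, 0)"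

definition proj_distinct :: "'k::field \<times> 'k \<Rightarrow> 'k \<times> 'k \<Rightarrow> bool" where
  "proj_distinct A B \<longleftrightarrow> fst A * snd B \<noteq> snd A * fst B"

text \<open>A fat point scheme Z is described by the distinct first projections R_0..R_(r-1),
  the distinct second projections Q_0..Q_(t-1) of its support, and the multiplicities
  m i j of R_i x Q_j (0 if the point is absent); every R_i and Q_j is hit by the support.\<close>
definition fat_point_data :: "nat \<Rightarrow> nat \<Rightarrow> (nat \<Rightarrow> 'k::field \<times> 'k) \<Rightarrow> (nat \<Rightarrow> 'k \<times> 'k)
    \<Rightarrow> (nat \<Rightarrow> nat \<Rightarrow> nat) \<Rightarrow> bool" where
  "fat_point_data r t R Q m \<longleftrightarrow>
     (\<forall>i<r. proj_pt (R i)) \<and> (\<forall>j<t. proj_pt (Q j)) \<and>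
     (\<forall>i<r. \<forall>i'<r. i \<noteq> i' \<longrightarrow> proj_distinct (R i) (R i')) \<and>
     (\<forall>j<t. \<forall>j'<t. j \<noteq> j' \<longrightarrow> proj_distinct (Q j) (Q j')) \<and>
     (\<forall>i<r. \<exists>j<t. m i j > 0) \<and> (\<forall>j<t. \<exists>i<r. m i j > 0)"

definition fat_ideal :: "nat \<Rightarrow> nat \<Rightarrow> (nat \<Rightarrow> 'k::field \<times> 'k) \<Rightarrow> (nat \<Rightarrow> 'k \<times> 'k)
    \<Rightarrow> (nat \<Rightarrow> nat \<Rightarrow> nat) \<Rightarrow> 'k bipoly set" where
  "fat_ideal r t R Q m =
     (\<Inter>(i, j) \<in> {(i, j). i < r \<and> j < t \<and> m i j > 0}. ideal_pow (point_ideal (R i) (Q j)) (m i j))"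

text \<open>Hilbert function H_Z(i,j) = dim_k (R/I_Z)_(i,j) = dim_k R_(i,j) - dim_k (I_Z)_(i,j),
  extended by 0 outside N^2.\<close>
definition hilb :: "nat \<Rightarrow> nat \<Rightarrow> (nat \<Rightarrow> 'k::field \<times> 'k) \<Rightarrow> (nat \<Rightarrow> 'k \<times> 'k)
    \<Rightarrow> (nat \<Rightarrow> nat \<Rightarrow> nat) \<Rightarrow> int \<Rightarrow> int \<Rightarrow> int" where
  "hilb r t R Q m i j =
     (if i < 0 \<or> j < 0 then 0
      else int (vector_space.dim pscale (bihom (nat i) (nat j) :: 'k bipoly set))
         - int (vector_space.dim pscale (fat_ideal r t R Q m \<inter> bihom (nat i) (nat j))))"

definition delta_hilb :: "nat \<Rightarrow> nat \<Rightarrow> (nat \<Rightarrow> 'k::field \<times> 'k) \<Rightarrow> (nat \<Rightarrow> 'k \<times> 'k)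
    \<Rightarrow> (nat \<Rightarrow> nat \<Rightarrow> nat) \<Rightarrow> int \<Rightarrow> int \<Rightarrow> int" where
  "delta_hilb r t R Q m i j =
     hilb r t R Q m i j - hilb r t R Q m (i - 1) j - hilb r t R Q m i (j - 1)
     + hilb r t R Q m (i - 1) (j - 1)"

definition row_l :: "nat \<Rightarrow> (nat \<Rightarrow> nat \<Rightarrow> nat) \<Rightarrow> nat \<Rightarrow> nat" where
  "row_l t m i = Max ({m i j | j. j < t} \<union> {0})"

definition col_l :: "nat \<Rightarrow> (nat \<Rightarrow> nat \<Rightarrow> nat) \<Rightarrow> nat \<Rightarrow> nat" where
  "col_l r m j = Max ({m i j | i. i < r} \<union> {0})"

definition alpha :: "nat \<Rightarrow> nat \<Rightarrow> (nat \<Rightarrow> nat \<Rightarrow> nat) \<Rightarrow> nat list" where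
  "alpha r t m = rev (sort [(\<Sum>j<t. m i j - k). i \<leftarrow> [0..<r], k \<leftarrow> [0..<row_l t m i]])"

definition beta :: "nat \<Rightarrow> nat \<Rightarrow> (nat \<Rightarrow> nat \<Rightarrow> nat) \<Rightarrow> nat list" where
  "beta r t m = rev (sort [(\<Sum>i<r. m i j - k). j \<leftarrow> [0..<t], k \<leftarrow> [0..<col_l r m j]])"

text \<open>Conjugate partition, as a function of the (1-based) index; 0 beyond its length.\<close>
definition conj_part :: "nat list \<Rightarrow> nat \<Rightarrow> nat" where
  "conj_part lam i = card {j. j < length lam \<and> lam ! j \<ge> i}"

end

theory Submission
  imports Defs
begin

text \<open>Let \<open>L = |\<alpha>\<^sub>Z| = \<Sum> l\<^sub>i\<close>, let \<open>\<lambda>\<^sub>i\<close> be the linear form in \<open>x\<close> vanishing at \<open>R\<^sub>i\<close> and \<open>\<nu>\<^sub>i\<close> one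
  not vanishing there. The \<open>L\<close> forms \<open>g\<^sub>i\<^sub>,\<^sub>a = \<lambda>\<^sub>i^a \<nu>\<^sub>i^(l\<^sub>i - 1 - a) \<Prod>\<^sub>i\<^sub>' \<^sub>\<noteq> \<^sub>i \<lambda>\<^sub>i\<^sub>'^l\<^sub>i\<^sub>'\<close>, \<open>a < l\<^sub>i\<close>, of
  bidegree \<open>(L - 1, 0)\<close> are linearly independent: expand a relation \<open>\<lambda>\<^sub>i\<close>-adically and restrict it
  to the zero of \<open>\<lambda>\<^sub>i\<close>. Hence the products of the \<open>g\<^sub>i\<^sub>,\<^sub>a\<close> with the monomials of degree \<open>j\<close> in \<open>y\<close>
  form a basis of \<open>R\<^sub>(\<^sub>L\<^sub>-\<^sub>1\<^sub>,\<^sub>j\<^sub>)\<close>. For an element \<open>\<Sum> g\<^sub>i\<^sub>,\<^sub>a T\<^sub>i\<^sub>,\<^sub>a\<close> of this space the same expansion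
  shows that membership in \<open>(\<lambda>\<^sub>i, \<lambda>'\<^sub>j)^m\<^sub>i\<^sub>j\<close> forces \<open>\<lambda>'\<^sub>j^(m\<^sub>i\<^sub>j - a)\<close> to divide \<open>T\<^sub>i\<^sub>,\<^sub>a\<close>.
  So \<open>(I\<^sub>Z)\<^sub>(\<^sub>L\<^sub>-\<^sub>1\<^sub>,\<^sub>j\<^sub>)\<close> has the basis \<open>g\<^sub>i\<^sub>,\<^sub>a P\<^sub>i\<^sub>,\<^sub>a y^q\<close>, where \<open>P\<^sub>i\<^sub>,\<^sub>a = \<Prod>\<^sub>j \<lambda>'\<^sub>j^(m\<^sub>i\<^sub>j - a)\<^sub>+\<close>
  has degree \<open>a\<^sub>i\<^sub>,\<^sub>a\<close>, and \<open>H\<^sub>Z(L - 1, j) = \<Sum>\<^sub>i\<^sub>,\<^sub>a min (j + 1) a\<^sub>i\<^sub>,\<^sub>a\<close>. The sum of \<open>\<Delta>H\<^sub>Z\<close> over a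
  column therefore telescopes to \<open>H\<^sub>Z(L - 1, j) - H\<^sub>Z(L - 1, j - 1) = #{(i, a). a\<^sub>i\<^sub>,\<^sub>a \<ge> j + 1}\<close>,
  which is \<open>\<alpha>\<^sup>*\<^sub>j\<^sub>+\<^sub>1\<close>; this is (i), and exchanging the two factors of \<open>\<P>\<^sup>1 \<times> \<P>\<^sup>1\<close> turns (i)
  into (ii).\<close>

lemma dvd_diff_mult: "(d :: 'a::comm_ring_1) dvd a - a' \<Longrightarrow> d dvd b - b' \<Longrightarrow> d dvd a * b - a' * b'"
proof -
  assume "d dvd a - a'" "d dvd b - b'"
  then have "d dvd a * (b - b') + (a - a') * b'"
    by simp
  then show ?thesis
    by (simp add: algebra_simps)
qed

lemma dvd_diff_power: "(d :: 'a::comm_ring_1) dvd a - a' \<Longrightarrow> d dvd a ^ n - a' ^ n"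
  by (induct n) (simp_all add: dvd_diff_mult)

lemma prime_elem_power_dvd_mult_cancel:
  fixes p :: "'a::idom"
  assumes "prime_elem p" and "\<not> p dvd q" and "p ^ e dvd q * s"
  shows "p ^ e dvd s"
  using assms(3)
proof (induct e arbitrary: s)
  case (Suc e)
  then have "p * p ^ e dvd q * s"
    by simp
  then have "p dvd q * s"
    by (rule dvd_mult_left)
  with assms(1,2) have "p dvd s"
    by (simp add: prime_elem_dvd_mult_iff)
  then obtain s' where s': "s = p * s'" ..
  have "p * p ^ e dvd p * (q * s')"
    using Suc.prems s' by (simp add: algebra_simps)
  then have "p ^ e dvd q * s'"
    using assms(1) unfolding prime_elem_def by simp
  then have "p ^ e dvd s'"
    by (rule Suc.hyps)
  then show ?case
    using s' by simp
qed simp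

lemma not_prime_elem_dvd_prod:
  assumes "prime_elem p" and "\<And>x. x \<in> S \<Longrightarrow> \<not> p dvd f x"
  shows "\<not> p dvd prod f S"
  using assms(2)
proof (induct S rule: infinite_finite_induct)
  case (insert x F)
  then show ?case
    using assms(1) by (simp add: prime_elem_dvd_mult_iff)
qed (simp_all add: prime_elem_not_unit[OF assms(1)])

lemma not_prime_elem_dvd_mult: "prime_elem p \<Longrightarrow> \<not> p dvd a \<Longrightarrow> \<not> p dvd b \<Longrightarrow> \<not> p dvd a * b"
  by (simp add: prime_elem_dvd_mult_iff)

lemma not_prime_elem_dvd_power: "prime_elem p \<Longrightarrow> \<not> p dvd a \<Longrightarrow> \<not> p dvd a ^ n"
  using prime_elem_dvd_power by blast

lemma prod_prime_powers_dvd: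
  fixes u :: "'b \<Rightarrow> 'a::idom"
  assumes "finite S" and "\<And>j. j \<in> S \<Longrightarrow> prime_elem (u j)"
    and "\<And>j j'. j \<in> S \<Longrightarrow> j' \<in> S \<Longrightarrow> j \<noteq> j' \<Longrightarrow> \<not> u j dvd u j'"
    and "\<And>j. j \<in> S \<Longrightarrow> u j ^ e j dvd d"
  shows "(\<Prod>j\<in>S. u j ^ e j) dvd d"
  using assms
proof (induct S rule: finite_induct)
  case (insert x F)
  then have "(\<Prod>j\<in>F. u j ^ e j) dvd d"
    by auto
  then obtain s where s: "d = (\<Prod>j\<in>F. u j ^ e j) * s" ..
  have "\<not> u x dvd (\<Prod>j\<in>F. u j ^ e j)"
    using insert by (intro not_prime_elem_dvd_prod) (auto dest: prime_elem_dvd_power)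
  moreover have "u x ^ e x dvd (\<Prod>j\<in>F. u j ^ e j) * s"
    using insert.prems(3) s by simp
  ultimately have "u x ^ e x dvd s"
    using insert.prems(1) prime_elem_power_dvd_mult_cancel by blast
  then have "(\<Prod>j\<in>F. u j ^ e j) * u x ^ e x dvd (\<Prod>j\<in>F. u j ^ e j) * s"
    by (rule mult_dvd_mono[OF dvd_refl])
  then show ?case
    using insert.hyps s by (simp add: mult.commute)
qed simp

text \<open>The order on variables is immaterial; it only makes the monomials
  \<^typ>\<open>var \<Rightarrow>\<^sub>0 nat\<close> a linear order, so that \<^typ>\<open>'k bipoly\<close> becomes an integral domain.\<close>

instantiation var :: linorder
begin

fun var_index :: "var \<Rightarrow> nat" where
  "var_index X0 = 0" | "var_index X1 = 1" | "var_index Y0 = 2" | "var_index Y1 = 3"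

definition less_eq_var :: "var \<Rightarrow> var \<Rightarrow> bool" where
  "less_eq_var a b \<longleftrightarrow> var_index a \<le> var_index b"

definition less_var :: "var \<Rightarrow> var \<Rightarrow> bool" where
  "less_var a b \<longleftrightarrow> var_index a < var_index b"

instance
proof
  fix x y :: var
  show "x \<le> y \<Longrightarrow> y \<le> x \<Longrightarrow> x = y"
    by (cases x; cases y; simp add: less_eq_var_def)
qed (auto simp: less_eq_var_def less_var_def)

end

type_synonym monom = "var \<Rightarrow>\<^sub>0 nat"

abbreviation lookup :: "('a \<Rightarrow>\<^sub>0 'b::zero) \<Rightarrow> 'a \<Rightarrow> 'b" where
  "lookup \<equiv> Poly_Mapping.lookup"

abbreviation keys :: "('a \<Rightarrow>\<^sub>0 'b::zero) \<Rightarrow> 'a set" where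
  "keys \<equiv> Poly_Mapping.keys"

abbreviation single :: "'a \<Rightarrow> 'b \<Rightarrow> ('a \<Rightarrow>\<^sub>0 'b::zero)" where
  "single \<equiv> Poly_Mapping.single"

lemma pconst_mult: "pconst (a * b) = (pconst a * pconst b :: 'k::comm_ring_1 bipoly)"
  unfolding pconst_def by (simp add: mult_single)

lemma pconst_add: "pconst (a + b) = (pconst a + pconst b :: 'k::comm_ring_1 bipoly)"
  unfolding pconst_def by (simp add: single_add)

lemma pconst_diff: "pconst (a - b) = (pconst a - pconst b :: 'k::comm_ring_1 bipoly)"
  unfolding pconst_def by (simp add: single_diff)

lemma pconst_uminus: "pconst (- b) = (- pconst b :: 'k::comm_ring_1 bipoly)"
  unfolding pconst_def by (simp add: single_uminus)

lemma pconst_1 [simp]: "pconst 1 = (1 :: 'k::comm_ring_1 bipoly)"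
  unfolding pconst_def by simp

lemma pconst_0 [simp]: "pconst 0 = (0 :: 'k::comm_ring_1 bipoly)"
  unfolding pconst_def by simp

lemma pconst_eq_0_iff [simp]: "pconst c = (0 :: 'k::comm_ring_1 bipoly) \<longleftrightarrow> c = 0"
  unfolding pconst_def by (metis lookup_single_eq single_zero)

interpretation kspace: vector_space "pscale :: 'k::field \<Rightarrow> 'k bipoly \<Rightarrow> 'k bipoly"
  by unfold_locales (simp_all add: pscale_def pconst_add pconst_mult algebra_simps)

lemma single_eq_pconst_mult: "single mon c = pconst c * (single mon 1 :: 'k::comm_ring_1 bipoly)"
  by (simp add: pconst_def mult_single)

lemma poly_mapping_sum_single: "p = (\<Sum>mon\<in>keys p. single mon (lookup p mon))"
  by (rule poly_mapping_eqI) (simp add: lookup_sum lookup_single when_def in_keys_iff)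

lemma keys_pvar: "keys (pvar v :: 'k::comm_ring_1 bipoly) = {single v 1}"
  by (simp add: pvar_def)

lemma pvar_power: "(pvar v :: 'k::comm_ring_1 bipoly) ^ n = single (single v n) 1"
proof (induct n)
  case (Suc n)
  have "single v 1 + single v n = single v (Suc n)"
    by (simp add: single_add[symmetric])
  with Suc show ?case
    by (simp add: pvar_def mult_single)
qed simp

lemma lookup_pconst_pvar:
  "lookup (pconst c * pvar v :: 'k::comm_ring_1 bipoly) mon = (if mon = single v 1 then c else 0)"
  by (simp add: pconst_def pvar_def mult_single lookup_single when_def eq_commute)

lemma pconst_mult_pvar_neq_0: "c \<noteq> 0 \<Longrightarrow> pconst c * pvar v \<noteq> (0 :: 'k::comm_ring_1 bipoly)"
  by (metis lookup_pconst_pvar lookup_zero)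

lemma single_eq_single_iff [simp]: "n \<noteq> 0 \<Longrightarrow> single a (n::nat) = single b n \<longleftrightarrow> a = b"
  by (metis lookup_single_eq lookup_single_not_eq)

lemma pvar_neq_0 [simp]: "pvar v \<noteq> (0 :: 'k::comm_ring_1 bipoly)"
  using pconst_mult_pvar_neq_0[of 1 v] by simp

definition deg_x :: "monom \<Rightarrow> nat" where
  "deg_x mon = lookup mon X0 + lookup mon X1"

definition deg_y :: "monom \<Rightarrow> nat" where
  "deg_y mon = lookup mon Y0 + lookup mon Y1"

lemma bihom_iff: "p \<in> bihom i j \<longleftrightarrow> (\<forall>mon\<in>keys p. deg_x mon = i \<and> deg_y mon = j)"
  by (simp add: bihom_def deg_x_def deg_y_def)

lemma bihom_0 [simp]: "0 \<in> bihom i j"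
  by (simp add: bihom_iff)

lemma bihom_add: "p \<in> bihom i j \<Longrightarrow> q \<in> bihom i j \<Longrightarrow> p + q \<in> bihom i j"
  using keys_add[of p q] unfolding bihom_iff by blast

lemma bihom_diff:
  "p \<in> bihom i j \<Longrightarrow> q \<in> bihom i j \<Longrightarrow> (p :: 'k::comm_ring_1 bipoly) - q \<in> bihom i j"
  using bihom_add[of p i j "- q"] by (simp add: bihom_iff)

lemma bihom_mult:
  assumes "p \<in> bihom i j" and "q \<in> bihom i' j'"
  shows "(p :: 'k::comm_ring_1 bipoly) * q \<in> bihom (i + i') (j + j')"
  unfolding bihom_iff
proof
  fix mon
  assume "mon \<in> keys (p * q)"
  then obtain a b where "a \<in> keys p" "b \<in> keys q" "mon = a + b"
    using keys_mult[of p q] by blast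
  with assms show "deg_x mon = i + i' \<and> deg_y mon = j + j'"
    unfolding bihom_iff deg_x_def deg_y_def by (auto simp: lookup_add)
qed

lemma bihom_sum: "(\<And>x. x \<in> S \<Longrightarrow> f x \<in> bihom i j) \<Longrightarrow> sum f S \<in> bihom i j"
  by (induct S rule: infinite_finite_induct) (auto intro: bihom_add)

lemma bihom_pconst [simp]: "pconst c \<in> bihom 0 0"
  by (simp add: pconst_def bihom_iff deg_x_def deg_y_def)

lemma bihom_pconst_mult: "p \<in> bihom i j \<Longrightarrow> pconst c * (p :: 'k::comm_ring_1 bipoly) \<in> bihom i j"
  using bihom_mult[OF bihom_pconst, of p i j c] by simp

lemma bihom_power: "p \<in> bihom i j \<Longrightarrow> (p :: 'k::comm_ring_1 bipoly) ^ n \<in> bihom (n * i) (n * j)"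
proof (induct n)
  case 0
  show ?case
    using bihom_pconst[of 1] by simp
qed (auto dest: bihom_mult)

lemma bihom_prod:
  "(\<And>x. x \<in> S \<Longrightarrow> f x \<in> bihom (di x) (dj x)) \<Longrightarrow>
     (\<Prod>x\<in>S. f x :: 'k::comm_ring_1 bipoly) \<in> bihom (\<Sum>x\<in>S. di x) (\<Sum>x\<in>S. dj x)"
proof (induct S rule: infinite_finite_induct)
  case (infinite S)
  then show ?case
    using bihom_pconst[of 1] by simp
next
  case empty
  then show ?case
    using bihom_pconst[of 1] by simp
qed (auto dest: bihom_mult)

lemma bihom_pvar:
  "pvar X0 \<in> bihom 1 0" "pvar X1 \<in> bihom 1 0" "pvar Y0 \<in> bihom 0 1" "pvar Y1 \<in> bihom 0 1"
  by (simp_all add: bihom_iff keys_pvar deg_x_def deg_y_def lookup_single)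

definition monom_subst :: "(var \<Rightarrow> 'k::comm_ring_1 bipoly) \<Rightarrow> monom \<Rightarrow> 'k bipoly" where
  "monom_subst \<sigma> mon =
     \<sigma> X0 ^ lookup mon X0 * \<sigma> X1 ^ lookup mon X1 * \<sigma> Y0 ^ lookup mon Y0 * \<sigma> Y1 ^ lookup mon Y1"

definition psubst :: "(var \<Rightarrow> 'k::comm_ring_1 bipoly) \<Rightarrow> 'k bipoly \<Rightarrow> 'k bipoly" where
  "psubst \<sigma> p = (\<Sum>mon\<in>keys p. pconst (lookup p mon) * monom_subst \<sigma> mon)"

lemma monom_subst_add: "monom_subst \<sigma> (a + b) = monom_subst \<sigma> a * monom_subst \<sigma> b"
  by (simp add: monom_subst_def lookup_add power_add algebra_simps)

lemma monom_subst_pvar: "monom_subst pvar mon = (single mon 1 :: 'k::comm_ring_1 bipoly)"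
proof -
  have "mon = single X0 (lookup mon X0) + single X1 (lookup mon X1)
            + single Y0 (lookup mon Y0) + single Y1 (lookup mon Y1)"
    by (rule poly_mapping_eqI, rename_tac v, case_tac v) (simp_all add: lookup_add lookup_single)
  then have "single mon (1::'k) = single (single X0 (lookup mon X0) + single X1 (lookup mon X1)
                + single Y0 (lookup mon Y0) + single Y1 (lookup mon Y1)) 1"
    by simp
  then show ?thesis
    by (simp add: monom_subst_def pvar_power mult_single)
qed

lemma psubst_superset:
  "finite K \<Longrightarrow> keys p \<subseteq> K \<Longrightarrow> psubst \<sigma> p = (\<Sum>mon\<in>K. pconst (lookup p mon) * monom_subst \<sigma> mon)"
  unfolding psubst_def by (rule sum.mono_neutral_left) (auto simp: in_keys_iff)

lemma psubst_add: "psubst \<sigma> (p + q) = psubst \<sigma> p + psubst \<sigma> q"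
proof -
  let ?K = "keys p \<union> keys q"
  have "psubst \<sigma> (p + q) = (\<Sum>mon\<in>?K. pconst (lookup (p + q) mon) * monom_subst \<sigma> mon)"
    using keys_add[of p q] by (intro psubst_superset) auto
  also have "\<dots> = (\<Sum>mon\<in>?K. pconst (lookup p mon) * monom_subst \<sigma> mon)
                 + (\<Sum>mon\<in>?K. pconst (lookup q mon) * monom_subst \<sigma> mon)"
    by (simp add: lookup_add pconst_add algebra_simps sum.distrib)
  also have "\<dots> = psubst \<sigma> p + psubst \<sigma> q"
    using psubst_superset[of ?K p \<sigma>] psubst_superset[of ?K q \<sigma>] by simp
  finally show ?thesis .
qed

lemma psubst_0 [simp]: "psubst \<sigma> 0 = 0"
  by (simp add: psubst_def)

lemma psubst_uminus: "psubst \<sigma> (- p) = - psubst \<sigma> p"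
  using psubst_add[of \<sigma> p "- p"] by (intro minus_unique[symmetric]) simp

lemma psubst_diff: "psubst \<sigma> (p - q) = psubst \<sigma> p - psubst \<sigma> q"
  using psubst_add[of \<sigma> "p - q" q] by (simp add: algebra_simps)

lemma psubst_sum: "psubst \<sigma> (sum f S) = (\<Sum>x\<in>S. psubst \<sigma> (f x))"
  by (induct S rule: infinite_finite_induct) (auto simp: psubst_add)

lemma psubst_single: "psubst \<sigma> (single mon c) = pconst c * monom_subst \<sigma> mon"
  by (simp add: psubst_def)

lemma psubst_mult: "psubst \<sigma> (p * q) = psubst \<sigma> p * psubst \<sigma> q"
proof -
  have "p * q = (\<Sum>a\<in>keys p. \<Sum>b\<in>keys q. single a (lookup p a) * single b (lookup q b))"
    by (subst poly_mapping_sum_single[of p], subst poly_mapping_sum_single[of q]) (simp add: sum_product)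
  then have "psubst \<sigma> (p * q) = (\<Sum>a\<in>keys p. \<Sum>b\<in>keys q.
               psubst \<sigma> (single a (lookup p a)) * psubst \<sigma> (single b (lookup q b)))"
    by (simp add: psubst_sum mult_single psubst_single monom_subst_add pconst_mult algebra_simps)
  also have "\<dots> = psubst \<sigma> p * psubst \<sigma> q"
    by (subst (3) poly_mapping_sum_single[of p], subst (3) poly_mapping_sum_single[of q])
      (simp add: sum_product psubst_sum)
  finally show ?thesis .
qed

lemma psubst_pconst [simp]: "psubst \<sigma> (pconst c) = pconst c"
  by (simp add: pconst_def psubst_single monom_subst_def)

lemma psubst_1 [simp]: "psubst \<sigma> 1 = 1"
  using psubst_pconst[of \<sigma> 1] by simp

lemma psubst_pvar [simp]: "psubst \<sigma> (pvar v) = \<sigma> v"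
  by (cases v) (simp_all add: pvar_def psubst_single monom_subst_def lookup_single)

lemma psubst_power: "psubst \<sigma> (p ^ n) = psubst \<sigma> p ^ n"
  by (induct n) (simp_all add: psubst_mult)

lemma dvd_diff_psubst:
  assumes "\<And>v. d dvd pvar v - \<sigma> v"
  shows "d dvd p - psubst \<sigma> (p :: 'k::comm_ring_1 bipoly)"
proof -
  have "p = (\<Sum>mon\<in>keys p. pconst (lookup p mon) * monom_subst pvar mon)"
    by (subst poly_mapping_sum_single) (simp add: monom_subst_pvar single_eq_pconst_mult[symmetric])
  then have "p - psubst \<sigma> p = (\<Sum>mon\<in>keys p. pconst (lookup p mon) * (monom_subst pvar mon - monom_subst \<sigma> mon))"
    by (simp add: psubst_def algebra_simps sum_subtractf)
  moreover have "d dvd monom_subst pvar mon - monom_subst \<sigma> mon" for mon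
    unfolding monom_subst_def by (intro dvd_diff_mult dvd_diff_power assms)
  ultimately show ?thesis
    by (auto intro!: dvd_sum)
qed

definition x_only :: "'k::comm_ring_1 bipoly \<Rightarrow> bool" where
  "x_only p \<longleftrightarrow> (\<forall>mon\<in>keys p. lookup mon Y0 = 0 \<and> lookup mon Y1 = 0)"

definition y_only :: "'k::comm_ring_1 bipoly \<Rightarrow> bool" where
  "y_only p \<longleftrightarrow> (\<forall>mon\<in>keys p. lookup mon X0 = 0 \<and> lookup mon X1 = 0)"

lemma bihom_y_only: "p \<in> bihom 0 j \<Longrightarrow> y_only p"
  by (auto simp: bihom_iff y_only_def deg_x_def)

lemma x_only_pconst [simp]: "x_only (pconst c)"
  and y_only_pconst [simp]: "y_only (pconst c)"
  by (simp_all add: x_only_def y_only_def pconst_def)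

lemma x_only_0 [simp]: "x_only 0" and y_only_0 [simp]: "y_only 0"
  and x_only_1 [simp]: "x_only 1" and y_only_1 [simp]: "y_only 1"
  using x_only_pconst[of 0] y_only_pconst[of 0] x_only_pconst[of 1] y_only_pconst[of 1] by simp_all

lemma x_only_pvar: "x_only (pvar X0)" "x_only (pvar X1)"
  by (simp_all add: x_only_def keys_pvar lookup_single)

lemma x_only_add: "x_only p \<Longrightarrow> x_only q \<Longrightarrow> x_only (p + q)"
  and y_only_add: "y_only p \<Longrightarrow> y_only q \<Longrightarrow> y_only (p + q)"
  using keys_add[of p q] by (auto simp: x_only_def y_only_def)

lemma x_only_diff: "x_only p \<Longrightarrow> x_only q \<Longrightarrow> x_only (p - q)"
  using x_only_add[of p "- q"] by (simp add: x_only_def)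

lemma x_only_mult: "x_only p \<Longrightarrow> x_only q \<Longrightarrow> x_only (p * q)"
  and y_only_mult: "y_only p \<Longrightarrow> y_only q \<Longrightarrow> y_only (p * q)"
  using keys_mult[of p q] by (auto simp: x_only_def y_only_def lookup_add)

lemma x_only_power: "x_only p \<Longrightarrow> x_only (p ^ n)"
  by (induct n) (auto intro: x_only_mult)

lemma x_only_sum: "(\<And>x. x \<in> S \<Longrightarrow> x_only (f x)) \<Longrightarrow> x_only (sum f S)"
  and y_only_sum: "(\<And>x. x \<in> S \<Longrightarrow> y_only (g x)) \<Longrightarrow> y_only (sum g S)"
  by (induct S rule: infinite_finite_induct) (auto intro: x_only_add y_only_add)

lemma x_only_prod: "(\<And>x. x \<in> S \<Longrightarrow> x_only (f x)) \<Longrightarrow> x_only (prod f S)"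
  by (induct S rule: infinite_finite_induct) (auto intro: x_only_mult)

lemma psubst_fixes_y_only:
  assumes "\<sigma> Y0 = pvar Y0" "\<sigma> Y1 = pvar Y1" "y_only p"
  shows "psubst \<sigma> p = p"
proof -
  have "monom_subst \<sigma> mon = monom_subst pvar mon" if "mon \<in> keys p" for mon
    using assms that by (simp add: monom_subst_def y_only_def)
  then show ?thesis
    by (simp add: psubst_def monom_subst_pvar single_eq_pconst_mult[symmetric]
        poly_mapping_sum_single[symmetric] cong: sum.cong)
qed

lemma psubst_x_only:
  assumes "x_only (\<sigma> X0)" "x_only (\<sigma> X1)" "x_only p"
  shows "x_only (psubst \<sigma> p)"
proof -
  have "x_only (monom_subst \<sigma> mon)" if "mon \<in> keys p" for mon
    using assms that by (simp add: monom_subst_def x_only_def[of p] x_only_mult x_only_power)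
  then show ?thesis
    unfolding psubst_def by (auto intro!: x_only_sum x_only_mult)
qed

subsection \<open>Exchanging the two factors of \<open>\<P>\<^sup>1 \<times> \<P>\<^sup>1\<close>\<close>

fun swap_var :: "var \<Rightarrow> var" where
  "swap_var X0 = Y0" | "swap_var X1 = Y1" | "swap_var Y0 = X0" | "swap_var Y1 = X1"

definition swap_xy :: "'k::comm_ring_1 bipoly \<Rightarrow> 'k bipoly" where
  "swap_xy = psubst (\<lambda>v. pvar (swap_var v))"

definition swap_monom :: "monom \<Rightarrow> monom" where
  "swap_monom mon = single X0 (lookup mon Y0) + single X1 (lookup mon Y1)
                    + single Y0 (lookup mon X0) + single Y1 (lookup mon X1)"

lemma lookup_swap_monom: "lookup (swap_monom mon) v = lookup mon (swap_var v)"
  by (cases v) (simp_all add: swap_monom_def lookup_add lookup_single)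

lemma swap_monom_swap_monom [simp]: "swap_monom (swap_monom mon) = mon"
  by (rule poly_mapping_eqI, rename_tac v, case_tac v) (simp_all add: lookup_swap_monom)

lemma monom_subst_swap_var:
  "monom_subst (\<lambda>v. pvar (swap_var v)) mon = (single (swap_monom mon) 1 :: 'k::comm_ring_1 bipoly)"
proof -
  have "monom_subst (\<lambda>v. pvar (swap_var v)) mon =
    (pvar Y0 ^ lookup mon X0 * pvar Y1 ^ lookup mon X1 * pvar X0 ^ lookup mon Y0 * pvar X1 ^ lookup mon Y1
      :: 'k bipoly)"
    by (simp add: monom_subst_def)
  also have "\<dots> = single (swap_monom mon) 1"
    by (simp add: pvar_power mult_single swap_monom_def ac_simps)
  finally show ?thesis .
qed

lemma lookup_swap_xy: "lookup (swap_xy p) mon = lookup p (swap_monom mon)"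
proof -
  have "lookup (swap_xy p) mon = (\<Sum>mon'\<in>keys p. if swap_monom mon' = mon then lookup p mon' else 0)"
    by (simp add: swap_xy_def psubst_def monom_subst_swap_var lookup_sum
        single_eq_pconst_mult[symmetric] lookup_single when_def)
  also have "\<dots> = (\<Sum>mon'\<in>keys p. if mon' = swap_monom mon then lookup p (swap_monom mon) else 0)"
    by (intro sum.cong refl) auto
  also have "\<dots> = lookup p (swap_monom mon)"
    by (simp add: in_keys_iff)
  finally show ?thesis .
qed

lemma swap_xy_swap_xy [simp]: "swap_xy (swap_xy p) = p"
  by (rule poly_mapping_eqI) (simp add: lookup_swap_xy)

lemma swap_xy_add: "swap_xy (a + b) = swap_xy a + swap_xy b"
  and swap_xy_mult: "swap_xy (a * b) = swap_xy a * swap_xy b"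
  and swap_xy_power: "swap_xy (a ^ n) = swap_xy a ^ n"
  and swap_xy_sum: "swap_xy (sum f S) = (\<Sum>x\<in>S. swap_xy (f x))"
  and swap_xy_pconst [simp]: "swap_xy (pconst c) = pconst c"
  and swap_xy_0 [simp]: "swap_xy 0 = 0"
  and swap_xy_1 [simp]: "swap_xy 1 = 1"
  by (simp_all add: swap_xy_def psubst_add psubst_mult psubst_power psubst_sum)

lemma swap_xy_eq_iff [simp]: "swap_xy a = swap_xy b \<longleftrightarrow> a = b"
  by (metis swap_xy_swap_xy)

lemma swap_xy_eq_0_iff [simp]: "swap_xy p = 0 \<longleftrightarrow> p = 0"
  using swap_xy_eq_iff[of p 0] by simp

lemma swap_xy_dvd_iff: "swap_xy a dvd swap_xy b \<longleftrightarrow> a dvd b"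
proof
  assume "swap_xy a dvd swap_xy b"
  then obtain c where "swap_xy b = swap_xy a * c"
    by (elim dvdE)
  then have "swap_xy (swap_xy b) = swap_xy (swap_xy a * c)"
    by simp
  then show "a dvd b"
    by (simp add: swap_xy_mult)
qed (auto simp: swap_xy_mult)

lemma prime_elem_swap_xy:
  assumes "prime_elem p"
  shows "prime_elem (swap_xy p)"
proof (rule prime_elemI)
  show "swap_xy p \<noteq> 0"
    using assms by simp
  show "\<not> swap_xy p dvd 1"
    using prime_elem_not_unit[OF assms] swap_xy_dvd_iff[of p 1] by simp
  fix a b
  assume "swap_xy p dvd a * b"
  then have "p dvd swap_xy a * swap_xy b"
    using swap_xy_dvd_iff[of p "swap_xy a * swap_xy b"] by (simp add: swap_xy_mult)
  then have "p dvd swap_xy a \<or> p dvd swap_xy b"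
    using assms by (simp add: prime_elem_dvd_mult_iff)
  then show "swap_xy p dvd a \<or> swap_xy p dvd b"
    using swap_xy_dvd_iff[of p "swap_xy a"] swap_xy_dvd_iff[of p "swap_xy b"] by simp
qed

lemma keys_swap_xy: "keys (swap_xy p) = swap_monom -` keys p"
  by (auto simp: in_keys_iff lookup_swap_xy)

lemma y_only_swap_xy: "y_only (swap_xy p) \<longleftrightarrow> x_only p"
proof
  assume y: "y_only (swap_xy p)"
  show "x_only p"
    unfolding x_only_def
  proof
    fix mon
    assume "mon \<in> keys p"
    then have "swap_monom mon \<in> keys (swap_xy p)"
      by (simp add: keys_swap_xy)
    with y have "lookup (swap_monom mon) X0 = 0 \<and> lookup (swap_monom mon) X1 = 0"
      unfolding y_only_def by blast
    then show "lookup mon Y0 = 0 \<and> lookup mon Y1 = 0"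
      by (simp add: lookup_swap_monom)
  qed
next
  assume x: "x_only p"
  show "y_only (swap_xy p)"
    unfolding y_only_def keys_swap_xy
  proof
    fix mon
    assume "mon \<in> swap_monom -` keys p"
    with x have "lookup (swap_monom mon) Y0 = 0 \<and> lookup (swap_monom mon) Y1 = 0"
      unfolding x_only_def by blast
    then show "lookup mon X0 = 0 \<and> lookup mon X1 = 0"
      by (simp add: lookup_swap_monom)
  qed
qed

lemma deg_x_swap_monom: "deg_x (swap_monom mon) = deg_y mon"
  and deg_y_swap_monom: "deg_y (swap_monom mon) = deg_x mon"
  by (simp_all add: deg_x_def deg_y_def lookup_swap_monom)

lemma swap_xy_bihom: "p \<in> bihom i j \<Longrightarrow> swap_xy p \<in> bihom j i"
  unfolding bihom_iff keys_swap_xy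
  by (metis deg_x_swap_monom deg_y_swap_monom vimageE)

lemma swap_xy_bihom_iff: "swap_xy p \<in> bihom j i \<longleftrightarrow> p \<in> bihom i j"
  using swap_xy_bihom[of p i j] swap_xy_bihom[of "swap_xy p" j i] by auto

definition lx :: "'k \<times> 'k \<Rightarrow> 'k::field bipoly" where
  "lx A = pconst (snd A) * pvar X0 - pconst (fst A) * pvar X1"

definition ly :: "'k \<times> 'k \<Rightarrow> 'k::field bipoly" where
  "ly B = pconst (snd B) * pvar Y0 - pconst (fst B) * pvar Y1"

lemma swap_xy_lx: "swap_xy (lx A) = ly A"
  by (simp add: swap_xy_def lx_def ly_def psubst_diff psubst_mult)

lemma point_ideal_eq: "point_ideal A B = ideal_gen {lx A, ly B}"
  by (simp add: point_ideal_def lx_def ly_def)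

definition lx_zero_subst :: "'k \<times> 'k \<Rightarrow> var \<Rightarrow> 'k::field bipoly" where
  "lx_zero_subst A v =
     (if snd A \<noteq> 0 then (if v = X0 then pconst (fst A / snd A) * pvar X1 else pvar v)
      else (if v = X1 then 0 else pvar v))"

definition lx_other :: "'k \<times> 'k \<Rightarrow> 'k::field bipoly" where
  "lx_other A = (if snd A \<noteq> 0 then pvar X1 else pvar X0)"

lemma lx_dvd_pvar_diff_zero_subst:
  assumes "proj_pt A"
  shows "lx A dvd pvar v - lx_zero_subst A v"
proof (cases "snd A \<noteq> 0")
  case True
  have "pconst (inverse (snd A)) * lx A = pvar X0 - pconst (fst A / snd A) * pvar X1"
    using True by (simp add: lx_def pconst_mult[symmetric] algebra_simps field_simps)
  then have "lx A dvd pvar X0 - pconst (fst A / snd A) * pvar X1"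
    by (metis dvd_triv_right)
  with True show ?thesis
    by (cases v) (simp_all add: lx_zero_subst_def)
next
  case False
  with assms have "fst A \<noteq> 0"
    by (cases A) (auto simp: proj_pt_def)
  have "pconst (- inverse (fst A)) * lx A = pconst (inverse (fst A) * fst A) * pvar X1"
    using False by (simp add: lx_def pconst_mult pconst_uminus algebra_simps)
  also have "\<dots> = pvar X1"
    using \<open>fst A \<noteq> 0\<close> by simp
  finally have "lx A dvd pvar X1"
    by (metis dvd_triv_right)
  with False show ?thesis
    by (cases v) (simp_all add: lx_zero_subst_def)
qed

lemma psubst_lx_zero_subst_lx: "psubst (lx_zero_subst A) (lx A) = 0"
  by (cases "snd A = 0")
    (simp_all add: lx_def lx_zero_subst_def psubst_diff psubst_uminus psubst_mult pconst_mult[symmetric]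
      mult.assoc[symmetric])

lemma lx_dvd_iff: "proj_pt A \<Longrightarrow> lx A dvd p \<longleftrightarrow> psubst (lx_zero_subst A) p = 0"
  using dvd_diff_psubst[of "lx A" "lx_zero_subst A" p, OF lx_dvd_pvar_diff_zero_subst]
  by (auto simp: psubst_mult psubst_lx_zero_subst_lx)

lemma psubst_lx_zero_subst_y_only: "y_only p \<Longrightarrow> psubst (lx_zero_subst A) p = p"
  by (rule psubst_fixes_y_only) (simp_all add: lx_zero_subst_def)

lemma x_only_psubst_lx_zero_subst: "x_only p \<Longrightarrow> x_only (psubst (lx_zero_subst A) p)"
  by (rule psubst_x_only) (simp_all add: lx_zero_subst_def x_only_pvar x_only_mult)

lemma lx_neq_0: "proj_pt A \<Longrightarrow> lx A \<noteq> 0"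
proof
  assume "proj_pt A" "lx A = 0"
  then have "lookup (lx A) (single X0 1) = 0" "lookup (lx A) (single X1 1) = 0"
    by simp_all
  then have "snd A = 0" "fst A = 0"
    by (simp_all add: lx_def lookup_minus lookup_pconst_pvar)
  with \<open>proj_pt A\<close> show False
    by (cases A) (simp add: proj_pt_def)
qed

lemma prime_elem_lx: "proj_pt A \<Longrightarrow> prime_elem (lx A)"
  unfolding prime_elem_def by (auto simp: lx_neq_0 lx_dvd_iff psubst_mult)

lemma x_only_lx: "x_only (lx A)"
  by (simp add: lx_def x_only_diff x_only_mult x_only_pvar)

lemma y_only_ly: "y_only (ly B)"
  using x_only_lx[of B] by (simp add: swap_xy_lx[symmetric] y_only_swap_xy)

lemma bihom_lx: "lx A \<in> bihom 1 0"
  unfolding lx_def by (intro bihom_diff bihom_pconst_mult bihom_pvar)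

lemma bihom_ly: "ly B \<in> bihom 0 1"
  using swap_xy_bihom[OF bihom_lx] by (simp add: swap_xy_lx)

lemma bihom_lx_other: "lx_other A \<in> bihom 1 0"
  by (simp add: lx_other_def bihom_iff keys_pvar deg_x_def deg_y_def lookup_single)

lemma x_only_lx_other: "x_only (lx_other A)"
  by (simp add: lx_other_def x_only_pvar)

lemma not_lx_dvd_lx_other: "proj_pt A \<Longrightarrow> \<not> lx A dvd lx_other A"
  by (simp add: lx_dvd_iff lx_other_def lx_zero_subst_def)

lemma not_lx_dvd_y_only: "proj_pt A \<Longrightarrow> y_only q \<Longrightarrow> q \<noteq> 0 \<Longrightarrow> \<not> lx A dvd q"
  by (simp add: lx_dvd_iff psubst_lx_zero_subst_y_only)

lemma not_lx_dvd_lx: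
  assumes "proj_pt A" and "proj_distinct A A'"
  shows "\<not> lx A dvd lx A'"
proof (cases "snd A \<noteq> 0")
  case True
  have "psubst (lx_zero_subst A) (lx A') =
      pconst (snd A') * (pconst (fst A / snd A) * pvar X1) - pconst (fst A') * pvar X1"
    using True by (simp add: lx_def lx_zero_subst_def psubst_diff psubst_mult)
  also have "\<dots> = pconst (snd A' * (fst A / snd A) - fst A') * pvar X1"
    by (simp only: pconst_mult pconst_diff algebra_simps)
  finally have "psubst (lx_zero_subst A) (lx A') = pconst (snd A' * (fst A / snd A) - fst A') * pvar X1" .
  moreover have "snd A' * (fst A / snd A) - fst A' \<noteq> 0"
    using True assms(2) by (auto simp: proj_distinct_def field_simps)
  ultimately show ?thesis
    using assms(1) by (simp add: lx_dvd_iff pconst_mult_pvar_neq_0)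
next
  case False
  then have "psubst (lx_zero_subst A) (lx A') = pconst (snd A') * pvar X0"
    by (simp add: lx_def lx_zero_subst_def psubst_diff psubst_mult)
  moreover have "snd A' \<noteq> 0"
    using False assms(2) by (auto simp: proj_distinct_def)
  ultimately show ?thesis
    using assms(1) by (simp add: lx_dvd_iff pconst_mult_pvar_neq_0)
qed

lemma swap_xy_ly: "swap_xy (ly B) = lx B"
  by (simp add: swap_xy_lx[symmetric])

lemma ly_neq_0: "proj_pt B \<Longrightarrow> ly B \<noteq> 0"
  using lx_neq_0[of B] by (simp add: swap_xy_lx[symmetric])

lemma prime_elem_ly: "proj_pt B \<Longrightarrow> prime_elem (ly B)"
  using prime_elem_swap_xy[OF prime_elem_lx] by (simp add: swap_xy_lx)

lemma not_ly_dvd_x_only: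
  assumes "proj_pt B" and "x_only q" and "q \<noteq> 0"
  shows "\<not> ly B dvd q"
proof
  assume "ly B dvd q"
  then have "lx B dvd swap_xy q"
    using swap_xy_dvd_iff[of "ly B" q] by (simp add: swap_xy_ly)
  moreover have "y_only (swap_xy q)"
    using assms(2) by (simp add: y_only_swap_xy)
  ultimately show False
    using not_lx_dvd_y_only[OF assms(1)] assms(3) by simp
qed

lemma not_ly_dvd_ly: "proj_pt B \<Longrightarrow> proj_distinct B B' \<Longrightarrow> \<not> ly B dvd ly B'"
  using not_lx_dvd_lx[of B B'] swap_xy_dvd_iff[of "ly B" "ly B'"] by (simp add: swap_xy_ly)

lemma not_lx_dvd_ly: "proj_pt A \<Longrightarrow> proj_pt B \<Longrightarrow> \<not> lx A dvd ly B"
  by (simp add: not_lx_dvd_y_only y_only_ly ly_neq_0)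

subsection \<open>Powers of an ideal with two generators\<close>

definition pair_ideal_pow :: "'k::comm_ring_1 bipoly \<Rightarrow> 'k bipoly \<Rightarrow> nat \<Rightarrow> 'k bipoly set" where
  "pair_ideal_pow l u n = {(\<Sum>c\<le>n. l ^ c * u ^ (n - c) * H c) | H. True}"

lemma pair_ideal_pow_add:
  assumes "a \<in> pair_ideal_pow l u n" and "b \<in> pair_ideal_pow l u n"
  shows "a + b \<in> pair_ideal_pow l u n"
proof -
  obtain H1 H2 where "a = (\<Sum>c\<le>n. l ^ c * u ^ (n - c) * H1 c)" "b = (\<Sum>c\<le>n. l ^ c * u ^ (n - c) * H2 c)"
    using assms by (auto simp: pair_ideal_pow_def)
  then have "a + b = (\<Sum>c\<le>n. l ^ c * u ^ (n - c) * (H1 c + H2 c))"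
    by (simp add: sum.distrib algebra_simps)
  then show ?thesis
    by (auto simp: pair_ideal_pow_def)
qed

lemma pair_ideal_pow_mult:
  assumes "a \<in> pair_ideal_pow l u n"
  shows "q * a \<in> pair_ideal_pow l u n"
proof -
  obtain H where "a = (\<Sum>c\<le>n. l ^ c * u ^ (n - c) * H c)"
    using assms by (auto simp: pair_ideal_pow_def)
  then have "q * a = (\<Sum>c\<le>n. l ^ c * u ^ (n - c) * (q * H c))"
    by (simp add: sum_distrib_left algebra_simps)
  then show ?thesis
    by (auto simp: pair_ideal_pow_def)
qed

lemma pair_ideal_pow_0: "0 \<in> pair_ideal_pow l u n"
  using pair_ideal_pow_mult[of _ l u n 0] by (auto simp: pair_ideal_pow_def)

lemma pair_ideal_pow_diff:
  "a \<in> pair_ideal_pow l u n \<Longrightarrow> b \<in> pair_ideal_pow l u n \<Longrightarrow> a - b \<in> pair_ideal_pow l u n"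
  using pair_ideal_pow_add[of a l u n "- 1 * b"] pair_ideal_pow_mult[of b l u n "- 1"] by simp

lemma pair_ideal_pow_sum:
  "(\<And>x. x \<in> S \<Longrightarrow> f x \<in> pair_ideal_pow l u n) \<Longrightarrow> sum f S \<in> pair_ideal_pow l u n"
  by (induct S rule: infinite_finite_induct) (auto intro: pair_ideal_pow_add pair_ideal_pow_0)

lemma pair_ideal_pow_monomial: "c \<le> n \<Longrightarrow> l ^ c * u ^ (n - c) * h \<in> pair_ideal_pow l u n"
proof -
  assume "c \<le> n"
  then have "(\<Sum>c'\<le>n. l ^ c' * u ^ (n - c') * (if c' = c then h else 0)) = l ^ c * u ^ (n - c) * h"
    by (simp add: if_distrib[of "\<lambda>x. _ * x"] cong: if_cong)
  then show ?thesis
    unfolding pair_ideal_pow_def by (intro CollectI exI[of _ "\<lambda>c'. if c' = c then h else 0"]) simp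
qed

lemma pair_ideal_pow_dvd: "c \<le> n \<Longrightarrow> l ^ c * u ^ (n - c) dvd f \<Longrightarrow> f \<in> pair_ideal_pow l u n"
  using pair_ideal_pow_monomial by (auto elim!: dvdE)

lemma pair_ideal_pow_Suc_mult_left: "p \<in> pair_ideal_pow l u n \<Longrightarrow> l * p \<in> pair_ideal_pow l u (Suc n)"
proof -
  assume "p \<in> pair_ideal_pow l u n"
  then obtain H where "p = (\<Sum>c\<le>n. l ^ c * u ^ (n - c) * H c)"
    by (auto simp: pair_ideal_pow_def)
  then have "l * p = (\<Sum>c\<le>n. l ^ Suc c * u ^ (Suc n - Suc c) * H c)"
    by (simp add: sum_distrib_left algebra_simps)
  also have "\<dots> \<in> pair_ideal_pow l u (Suc n)"
    by (intro pair_ideal_pow_sum pair_ideal_pow_monomial) auto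
  finally show ?thesis .
qed

lemma pair_ideal_pow_Suc_mult_right: "p \<in> pair_ideal_pow l u n \<Longrightarrow> u * p \<in> pair_ideal_pow l u (Suc n)"
proof -
  assume "p \<in> pair_ideal_pow l u n"
  then obtain H where "p = (\<Sum>c\<le>n. l ^ c * u ^ (n - c) * H c)"
    by (auto simp: pair_ideal_pow_def)
  then have "u * p = (\<Sum>c\<le>n. l ^ c * u ^ (Suc n - c) * H c)"
    by (simp add: sum_distrib_left algebra_simps Suc_diff_le)
  also have "\<dots> \<in> pair_ideal_pow l u (Suc n)"
    by (intro pair_ideal_pow_sum pair_ideal_pow_monomial) auto
  finally show ?thesis .
qed

lemma pair_ideal_pow_SucE:
  assumes "f \<in> pair_ideal_pow l u (Suc n)"
  obtains h k where "f = u ^ Suc n * h + l * k" and "k \<in> pair_ideal_pow l u n"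
proof -
  obtain H where "f = (\<Sum>c\<le>Suc n. l ^ c * u ^ (Suc n - c) * H c)"
    using assms by (auto simp: pair_ideal_pow_def)
  also have "\<dots> = u ^ Suc n * H 0 + (\<Sum>c\<le>n. l ^ Suc c * u ^ (Suc n - Suc c) * H (Suc c))"
    by (subst sum.atMost_Suc_shift) simp
  also have "\<dots> = u ^ Suc n * H 0 + l * (\<Sum>c\<le>n. l ^ c * u ^ (n - c) * H (Suc c))"
    by (simp add: sum_distrib_left algebra_simps)
  finally show ?thesis
    by (rule that) (auto simp: pair_ideal_pow_def)
qed

lemma pair_ideal_pow_Suc_cancel_left:
  fixes l u :: "'k::field bipoly"
  assumes "prime_elem l" and "\<not> l dvd u" and "l * f \<in> pair_ideal_pow l u (Suc n)"
  shows "f \<in> pair_ideal_pow l u n"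
proof -
  obtain h k where hk: "l * f = u ^ Suc n * h + l * k" "k \<in> pair_ideal_pow l u n"
    using pair_ideal_pow_SucE[OF assms(3)] by blast
  then have "u ^ Suc n * h = l * (f - k)"
    by (simp add: algebra_simps)
  then have "l dvd u ^ Suc n * h"
    by simp
  moreover have "\<not> l dvd u ^ Suc n"
    using assms(1,2) prime_elem_dvd_power by blast
  ultimately have "l dvd h"
    using assms(1) prime_elem_dvd_mult_iff by blast
  then obtain h' where h': "h = l * h'" ..
  have "l * f = l * (u ^ Suc n * h' + k)"
    using hk(1) h' by (simp add: algebra_simps)
  then have "f = u ^ Suc n * h' + k"
    using assms(1) unfolding prime_elem_def by simp
  moreover have "u ^ Suc n * h' \<in> pair_ideal_pow l u n"
    using pair_ideal_pow_monomial[of 0 n l u "u * h'"] by (simp add: algebra_simps)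
  ultimately show ?thesis
    using hk(2) by (simp add: pair_ideal_pow_add)
qed

lemma pair_ideal_pow_commute: "pair_ideal_pow l u n \<subseteq> pair_ideal_pow u l n"
proof
  fix f
  assume "f \<in> pair_ideal_pow l u n"
  then obtain H where H: "f = (\<Sum>c\<le>n. l ^ c * u ^ (n - c) * H c)"
    by (auto simp: pair_ideal_pow_def)
  have "l ^ c * u ^ (n - c) * H c \<in> pair_ideal_pow u l n" if "c \<le> n" for c
    using pair_ideal_pow_monomial[of "n - c" n u l "H c"] that by (simp add: mult.commute)
  then show "f \<in> pair_ideal_pow u l n"
    unfolding H by (intro pair_ideal_pow_sum) auto
qed

lemma ideal_gen_base: "s \<in> S \<Longrightarrow> s \<in> ideal_gen S"
  unfolding ideal_gen_def by (intro CollectI exI[of _ "{s}"] exI[of _ "\<lambda>_. 1"]) simp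

lemma ideal_gen_mult: "a \<in> ideal_gen S \<Longrightarrow> q * a \<in> ideal_gen S"
  unfolding ideal_gen_def
  by (auto simp: sum_distrib_left mult.assoc intro!: exI[of _ "\<lambda>f. q * _ f"])

lemma ideal_gen_0: "0 \<in> ideal_gen S"
  unfolding ideal_gen_def by (intro CollectI exI[of _ "{}"]) simp

lemma ideal_gen_add:
  assumes "a \<in> ideal_gen S" and "b \<in> ideal_gen S"
  shows "a + b \<in> ideal_gen S"
proof -
  obtain F1 c1 F2 c2 where F: "finite F1" "F1 \<subseteq> S" "a = (\<Sum>f\<in>F1. c1 f * f)"
    "finite F2" "F2 \<subseteq> S" "b = (\<Sum>f\<in>F2. c2 f * f)"
    using assms by (auto simp: ideal_gen_def)
  let ?c = "\<lambda>f. (if f \<in> F1 then c1 f else 0) + (if f \<in> F2 then c2 f else 0)"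
  have "?c f * f = (if f \<in> F1 then c1 f * f else 0) + (if f \<in> F2 then c2 f * f else 0)" for f
    by (simp add: algebra_simps)
  then have "(\<Sum>f\<in>F1 \<union> F2. ?c f * f) =
      (\<Sum>f\<in>F1 \<union> F2. if f \<in> F1 then c1 f * f else 0) + (\<Sum>f\<in>F1 \<union> F2. if f \<in> F2 then c2 f * f else 0)"
    by (simp add: sum.distrib[symmetric])
  also have "\<dots> = a + b"
    using F by (simp add: sum.If_cases Int_absorb1 Int_absorb2)
  finally show ?thesis
    unfolding ideal_gen_def using F by (intro CollectI exI[of _ "F1 \<union> F2"] exI[of _ ?c]) auto
qed

lemma ideal_gen_sum: "(\<And>x. x \<in> T \<Longrightarrow> f x \<in> ideal_gen S) \<Longrightarrow> sum f T \<in> ideal_gen S"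
  by (induct T rule: infinite_finite_induct) (auto intro: ideal_gen_add ideal_gen_0)

lemma ideal_gen_least:
  assumes "S \<subseteq> I" and "\<And>a b. a \<in> I \<Longrightarrow> b \<in> I \<Longrightarrow> a + b \<in> I"
    and "\<And>q a. a \<in> I \<Longrightarrow> q * a \<in> I" and "0 \<in> I"
  shows "ideal_gen S \<subseteq> I"
proof
  fix p
  assume "p \<in> ideal_gen S"
  then obtain F c where F: "finite F" "F \<subseteq> S" "p = (\<Sum>f\<in>F. c f * f)"
    by (auto simp: ideal_gen_def)
  have "(\<Sum>f\<in>F. c f * f) \<in> I"
    using F(1,2) by (induct F rule: finite_induct) (use assms in auto)
  then show "p \<in> I"
    using F by simp
qed

lemma pair_ideal_pow_mult_Suc:
  assumes "a \<in> pair_ideal_pow l u 1" and "p \<in> pair_ideal_pow l u n"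
  shows "a * p \<in> pair_ideal_pow l u (Suc n)"
proof -
  obtain h k where "a = u ^ Suc 0 * h + l * k"
    by (rule pair_ideal_pow_SucE[of a l u 0]) (use assms(1) in simp_all)
  then have "a * p = h * (u * p) + k * (l * p)"
    by (simp add: algebra_simps)
  then show ?thesis
    using assms(2) by (simp add: pair_ideal_pow_add pair_ideal_pow_mult
        pair_ideal_pow_Suc_mult_left pair_ideal_pow_Suc_mult_right)
qed

lemma ideal_gen_pair_subset: "ideal_gen {l, u} \<subseteq> pair_ideal_pow l u 1"
proof (rule ideal_gen_least)
  show "{l, u} \<subseteq> pair_ideal_pow l u 1"
    using pair_ideal_pow_monomial[of 1 1 l u 1] pair_ideal_pow_monomial[of 0 1 l u 1] by simp
qed (auto intro: pair_ideal_pow_add pair_ideal_pow_mult pair_ideal_pow_0)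

lemma prod_list_in_pair_ideal_pow:
  "set xs \<subseteq> ideal_gen {l, u} \<Longrightarrow> prod_list xs \<in> pair_ideal_pow l u (length xs)"
proof (induct xs)
  case Nil
  show ?case
    using pair_ideal_pow_monomial[of 0 0 l u 1] by simp
next
  case (Cons x xs)
  then have "x \<in> pair_ideal_pow l u 1" and "prod_list xs \<in> pair_ideal_pow l u (length xs)"
    using ideal_gen_pair_subset by auto
  then have "x * prod_list xs \<in> pair_ideal_pow l u (Suc (length xs))"
    by (rule pair_ideal_pow_mult_Suc)
  then show ?case
    by simp
qed

lemma ideal_pow_ideal_gen_pair: "ideal_pow (ideal_gen {l, u}) n = pair_ideal_pow l u n"
proof
  show "ideal_pow (ideal_gen {l, u}) n \<subseteq> pair_ideal_pow l u n"
    unfolding ideal_pow_def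
    by (rule ideal_gen_least)
      (auto intro: prod_list_in_pair_ideal_pow pair_ideal_pow_add pair_ideal_pow_mult pair_ideal_pow_0)
  show "pair_ideal_pow l u n \<subseteq> ideal_pow (ideal_gen {l, u}) n"
  proof
    fix f
    assume "f \<in> pair_ideal_pow l u n"
    then obtain H where H: "f = (\<Sum>c\<le>n. l ^ c * u ^ (n - c) * H c)"
      by (auto simp: pair_ideal_pow_def)
    have "l ^ c * u ^ (n - c) = prod_list (replicate c l @ replicate (n - c) u)" for c
      by simp
    then have "l ^ c * u ^ (n - c) \<in> ideal_pow (ideal_gen {l, u}) n" if "c \<le> n" for c
      unfolding ideal_pow_def using that
      by (intro ideal_gen_base CollectI exI[of _ "replicate c l @ replicate (n - c) u"])
        (auto intro: ideal_gen_base)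
    then show "f \<in> ideal_pow (ideal_gen {l, u}) n"
      unfolding H ideal_pow_def by (intro ideal_gen_sum) (auto simp: mult.commute intro: ideal_gen_mult)
  qed
qed

lemma mem_fat_ideal_iff:
  "f \<in> fat_ideal r t R Q m \<longleftrightarrow>
     (\<forall>i<r. \<forall>j<t. 0 < m i j \<longrightarrow> f \<in> pair_ideal_pow (lx (R i)) (ly (Q j)) (m i j))"
  by (auto simp: fat_ideal_def point_ideal_eq ideal_pow_ideal_gen_pair)

subsection \<open>Expansions in powers of \<open>lx A\<close>\<close>

lemma power_expansion_Suc:
  fixes l :: "'a::comm_ring_1"
  shows "(\<Sum>a<Suc n. l ^ a * w a * t a) + l ^ Suc n * G =
    w 0 * t 0 + l * ((\<Sum>a<n. l ^ a * w (Suc a) * t (Suc a)) + l ^ n * G)"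
proof -
  have "(\<Sum>a<Suc n. l ^ a * w a * t a) = w 0 * t 0 + (\<Sum>a<n. l ^ Suc a * w (Suc a) * t (Suc a))"
    by (subst sum.lessThan_Suc_shift) simp
  also have "(\<Sum>a<n. l ^ Suc a * w (Suc a) * t (Suc a)) = l * (\<Sum>a<n. l ^ a * w (Suc a) * t (Suc a))"
    by (simp add: sum_distrib_left mult.assoc)
  finally show ?thesis
    by (simp add: algebra_simps)
qed

text \<open>Restricting to the zero of \<^term>\<open>lx A\<close> isolates the term \<open>w 0 * t 0\<close> of such an expansion;
  the inductions below peel off one power of \<^term>\<open>lx A\<close> at a time.\<close>

lemma lx_expansion_eq_0:
  assumes "proj_pt A"
    and "\<forall>a<n. x_only (w a) \<and> \<not> lx A dvd w a" and "\<forall>a<n. y_only (t a)"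
    and "(\<Sum>a<n. lx A ^ a * w a * t a) + lx A ^ n * G = 0"
  shows "\<forall>a<n. t a = 0"
  using assms(2-4)
proof (induct n arbitrary: w t G)
  case (Suc n)
  let ?F = "(\<Sum>a<n. lx A ^ a * w (Suc a) * t (Suc a)) + lx A ^ n * G"
  have eq: "w 0 * t 0 + lx A * ?F = 0"
    using Suc.prems(3) power_expansion_Suc[where l = "lx A" and n = n and w = w and t = t and G = G] by simp
  then have "psubst (lx_zero_subst A) (w 0 * t 0 + lx A * ?F) = 0"
    by simp
  then have "psubst (lx_zero_subst A) (w 0) * t 0 = 0"
    using Suc.prems(2) by (simp add: psubst_add psubst_mult psubst_lx_zero_subst_lx psubst_lx_zero_subst_y_only)
  moreover have "psubst (lx_zero_subst A) (w 0) \<noteq> 0"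
    using Suc.prems(1) lx_dvd_iff[OF assms(1)] by auto
  ultimately have t0: "t 0 = 0"
    by simp
  with eq have "?F = 0"
    using lx_neq_0[OF assms(1)] by simp
  moreover have "\<forall>a<n. x_only (w (Suc a)) \<and> \<not> lx A dvd w (Suc a)" and "\<forall>a<n. y_only (t (Suc a))"
    using Suc.prems(1,2) by simp_all
  ultimately have "\<forall>a<n. t (Suc a) = 0"
    using Suc.hyps[of "\<lambda>a. w (Suc a)" "\<lambda>a. t (Suc a)" G] by blast
  with t0 show ?case
    by (auto simp: less_Suc_eq_0_disj)
qed simp

lemma lx_expansion_step:
  assumes "proj_pt A" and "proj_pt B" and "x_only w" and "\<not> lx A dvd w" and "y_only t"
    and "w * t + lx A * F \<in> pair_ideal_pow (lx A) (ly B) (Suc k)"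
  shows "ly B ^ Suc k dvd t" and "F \<in> pair_ideal_pow (lx A) (ly B) k"
proof -
  obtain h f where "w * t + lx A * F = ly B ^ Suc k * h + lx A * f"
    using assms(6) by (rule pair_ideal_pow_SucE)
  then have "psubst (lx_zero_subst A) (w * t + lx A * F) = psubst (lx_zero_subst A) (ly B ^ Suc k * h + lx A * f)"
    by simp
  then have "psubst (lx_zero_subst A) w * t = ly B ^ Suc k * psubst (lx_zero_subst A) h"
    using assms(5)
    by (simp add: psubst_add psubst_mult psubst_power psubst_lx_zero_subst_lx psubst_lx_zero_subst_y_only y_only_ly)
  then have "ly B ^ Suc k dvd psubst (lx_zero_subst A) w * t"
    by simp
  moreover have "\<not> ly B dvd psubst (lx_zero_subst A) w"
    using assms(3,4) lx_dvd_iff[OF assms(1)]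
    by (intro not_ly_dvd_x_only[OF assms(2)] x_only_psubst_lx_zero_subst) auto
  ultimately show t: "ly B ^ Suc k dvd t"
    using prime_elem_power_dvd_mult_cancel[OF prime_elem_ly[OF assms(2)]] by blast
  then have "w * t \<in> pair_ideal_pow (lx A) (ly B) (Suc k)"
    by (intro pair_ideal_pow_dvd[of 0]) auto
  then have "lx A * F \<in> pair_ideal_pow (lx A) (ly B) (Suc k)"
    using pair_ideal_pow_diff[OF assms(6)] by fastforce
  then show "F \<in> pair_ideal_pow (lx A) (ly B) k"
    by (rule pair_ideal_pow_Suc_cancel_left[OF prime_elem_lx[OF assms(1)] not_lx_dvd_ly[OF assms(1,2)]])
qed

lemma lx_expansion_in_pair_ideal_pow:
  assumes "proj_pt A" and "proj_pt B"
    and "\<forall>a<n. x_only (w a) \<and> \<not> lx A dvd w a" and "\<forall>a<n. y_only (t a)" and "k \<le> n"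
    and "(\<Sum>a<n. lx A ^ a * w a * t a) + lx A ^ n * G \<in> pair_ideal_pow (lx A) (ly B) k"
  shows "\<forall>a<k. ly B ^ (k - a) dvd t a"
  using assms(3-6)
proof (induct k arbitrary: n w t G)
  case (Suc k)
  obtain n' where n: "n = Suc n'"
    using Suc.prems(3) by (cases n) auto
  let ?F = "(\<Sum>a<n'. lx A ^ a * w (Suc a) * t (Suc a)) + lx A ^ n' * G"
  have "w 0 * t 0 + lx A * ?F \<in> pair_ideal_pow (lx A) (ly B) (Suc k)"
    using Suc.prems(4) n power_expansion_Suc[where l = "lx A" and n = n' and w = w and t = t and G = G] by simp
  moreover have "x_only (w 0)" "\<not> lx A dvd w 0" "y_only (t 0)"
    using Suc.prems(1,2) n by simp_all
  ultimately have t0: "ly B ^ Suc k dvd t 0" and "?F \<in> pair_ideal_pow (lx A) (ly B) k"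
    using lx_expansion_step[OF assms(1,2)] by blast+
  moreover have "\<forall>a<n'. x_only (w (Suc a)) \<and> \<not> lx A dvd w (Suc a)"
    and "\<forall>a<n'. y_only (t (Suc a))" and "k \<le> n'"
    using Suc.prems(1-3) n by simp_all
  ultimately have "\<forall>a<k. ly B ^ (k - a) dvd t (Suc a)"
    using Suc.hyps[of n' "\<lambda>a. w (Suc a)" "\<lambda>a. t (Suc a)" G] by blast
  with t0 show ?case
    by (auto simp: less_Suc_eq_0_disj)
qed simp

definition indep_family :: "'i set \<Rightarrow> ('i \<Rightarrow> 'k::field bipoly) \<Rightarrow> bool" where
  "indep_family I e \<longleftrightarrow> (\<forall>c. (\<Sum>i\<in>I. pconst (c i) * e i) = 0 \<longrightarrow> (\<forall>i\<in>I. c i = 0))"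

definition basis_family :: "'k::field bipoly set \<Rightarrow> 'i set \<Rightarrow> ('i \<Rightarrow> 'k bipoly) \<Rightarrow> bool" where
  "basis_family V I e \<longleftrightarrow> finite I \<and> indep_family I e \<and> e ` I \<subseteq> V \<and>
     (\<forall>v\<in>V. \<exists>c. v = (\<Sum>i\<in>I. pconst (c i) * e i))"

lemma indep_familyD: "indep_family I e \<Longrightarrow> (\<Sum>i\<in>I. pconst (c i) * e i) = 0 \<Longrightarrow> i \<in> I \<Longrightarrow> c i = 0"
  unfolding indep_family_def by blast

lemma indep_family_inj_on:
  fixes e :: "'i \<Rightarrow> 'k::field bipoly"
  assumes "finite I" and "indep_family I e"
  shows "inj_on e I"
proof
  fix a b
  assume ab: "a \<in> I" "b \<in> I" "e a = e b"
  show "a = b"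
  proof (rule ccontr)
    assume "a \<noteq> b"
    let ?c = "\<lambda>i. if i = a then 1 else if i = b then - 1 else (0::'k)"
    have "(\<Sum>i\<in>I. pconst (?c i) * e i) = (\<Sum>i\<in>I. (if i = a then e a else 0) + (if i = b then - e b else 0))"
      using \<open>a \<noteq> b\<close> by (intro sum.cong) (auto simp: pconst_uminus)
    also have "\<dots> = 0"
      using ab assms(1) by (simp add: sum.distrib)
    finally have "(\<Sum>i\<in>I. pconst (?c i) * e i) = 0" .
    from indep_familyD[OF assms(2) this ab(1)] show False
      by simp
  qed
qed

lemma indep_family_independent:
  assumes "finite I" and "indep_family I e"
  shows "kspace.independent (e ` I)"
proof (rule kspace.independent_if_scalars_zero)
  show "finite (e ` I)"
    using assms(1) by simp
  fix f x
  assume "(\<Sum>x\<in>e ` I. pscale (f x) x) = 0" and x: "x \<in> e ` I"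
  then have "(\<Sum>i\<in>I. pconst (f (e i)) * e i) = 0"
    by (simp add: sum.reindex[OF indep_family_inj_on[OF assms]] pscale_def)
  with x show "f x = 0"
    using indep_familyD[OF assms(2), of "\<lambda>i. f (e i)"] by auto
qed

lemma sum_pconst_mult_in_span: "(\<Sum>i\<in>I. pconst (c i) * e i) \<in> kspace.span (e ` I)"
  by (intro kspace.span_sum) (simp add: pscale_def[symmetric] kspace.span_scale kspace.span_base)

lemma basis_family_dim:
  assumes "basis_family V I e"
  shows "kspace.dim V = card I"
proof (rule kspace.dim_unique)
  have I: "finite I" "indep_family I e"
    using assms by (auto simp: basis_family_def)
  show "e ` I \<subseteq> V"
    using assms by (auto simp: basis_family_def)
  show "V \<subseteq> kspace.span (e ` I)"
    using assms sum_pconst_mult_in_span unfolding basis_family_def by fastforce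
  show "kspace.independent (e ` I)"
    by (rule indep_family_independent[OF I])
  show "card (e ` I) = card I"
    by (rule card_image[OF indep_family_inj_on[OF I]])
qed

lemma basis_family_if_card_eq:
  fixes e :: "'i \<Rightarrow> 'k::field bipoly" and f :: "'j \<Rightarrow> 'k bipoly"
  assumes "finite I" and "indep_family I e" and "e ` I \<subseteq> V"
    and "basis_family V J f" and "card I = card J"
  shows "basis_family V I e"
  unfolding basis_family_def
proof (intro conjI assms ballI)
  fix v
  assume v: "v \<in> V"
  have inj: "inj_on e I"
    by (rule indep_family_inj_on[OF assms(1,2)])
  have J: "finite J" "V \<subseteq> kspace.span (f ` J)"
    using assms(4) sum_pconst_mult_in_span unfolding basis_family_def by fastforce+
  have "v \<in> kspace.span (e ` I)"
  proof (rule ccontr)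
    assume v_notin: "v \<notin> kspace.span (e ` I)"
    have "kspace.independent (insert v (e ` I))"
      by (rule kspace.independent_insertI[OF v_notin indep_family_independent[OF assms(1,2)]])
    moreover have "insert v (e ` I) \<subseteq> kspace.span (f ` J)"
      using v assms(3) J(2) by auto
    ultimately have "card (insert v (e ` I)) \<le> card (f ` J)"
      using kspace.independent_span_bound J(1) by auto
    also have "\<dots> \<le> card I"
      using J(1) assms(5) card_image_le by auto
    moreover have "v \<notin> e ` I"
      using v_notin kspace.span_base by blast
    ultimately show False
      using assms(1) card_image[OF inj] by simp
  qed
  then obtain u where "v = (\<Sum>x\<in>e ` I. pscale (u x) x)"
    using kspace.span_finite[of "e ` I"] assms(1) by auto
  then have "v = (\<Sum>i\<in>I. pconst (u (e i)) * e i)"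
    by (simp add: sum.reindex[OF inj] pscale_def)
  then show "\<exists>c. v = (\<Sum>i\<in>I. pconst (c i) * e i)"
    by (rule exI[of _ "\<lambda>i. u (e i)"])
qed

lemma sum_Sigma_pconst_mult:
  fixes g :: "'i \<Rightarrow> 'k::comm_ring_1 bipoly"
  assumes "finite I" and "\<And>i. i \<in> I \<Longrightarrow> finite (B i)"
  shows "(\<Sum>iq\<in>Sigma I B. pconst (c iq) * (g (fst iq) * h (fst iq) (snd iq))) =
         (\<Sum>i\<in>I. g i * (\<Sum>q\<in>B i. pconst (c (i, q)) * h i q))"
proof -
  have "(\<Sum>iq\<in>Sigma I B. pconst (c iq) * (g (fst iq) * h (fst iq) (snd iq))) =
        (\<Sum>i\<in>I. \<Sum>q\<in>B i. pconst (c (i, q)) * (g i * h i q))"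
    using assms by (subst sum.Sigma) (auto simp: split_def)
  also have "\<dots> = (\<Sum>i\<in>I. g i * (\<Sum>q\<in>B i. pconst (c (i, q)) * h i q))"
    by (simp add: sum_distrib_left mult.left_commute)
  finally show ?thesis .
qed

lemma lookup_sum_monomials:
  "lookup (\<Sum>q\<in>S. pconst (c q) * single (M q) 1 :: 'k::comm_ring_1 bipoly) mon =
     (\<Sum>q\<in>S. if M q = mon then c q else 0)"
  by (simp add: lookup_sum single_eq_pconst_mult[symmetric] lookup_single when_def)

lemma indep_family_monomials:
  assumes "finite S" and "inj_on M S"
  shows "indep_family S (\<lambda>q. single (M q) 1 :: 'k::field bipoly)"
  unfolding indep_family_def
proof (intro allI impI ballI)
  fix c q
  assume sum0: "(\<Sum>q\<in>S. pconst (c q) * single (M q) 1 :: 'k bipoly) = 0" and q: "q \<in> S"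
  have "0 = lookup (\<Sum>q\<in>S. pconst (c q) * single (M q) 1 :: 'k bipoly) (M q)"
    using sum0 by simp
  also have "\<dots> = (\<Sum>q'\<in>S. if q' = q then c q' else 0)"
    unfolding lookup_sum_monomials using assms(2) q by (intro sum.cong) (auto dest: inj_onD)
  also have "\<dots> = c q"
    using assms(1) q by simp
  finally show "c q = 0"
    by simp
qed

lemma eq_sum_monomials:
  assumes "finite S" and "inj_on M S" and "keys f \<subseteq> M ` S"
  shows "f = (\<Sum>q\<in>S. pconst (lookup f (M q)) * single (M q) 1 :: 'k::comm_ring_1 bipoly)"
proof (rule poly_mapping_eqI)
  fix mon
  show "lookup f mon = lookup (\<Sum>q\<in>S. pconst (lookup f (M q)) * single (M q) 1 :: 'k bipoly) mon"
  proof (cases "mon \<in> M ` S")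
    case True
    then obtain q where q: "q \<in> S" "mon = M q"
      by blast
    have "(\<Sum>q'\<in>S. if M q' = mon then lookup f (M q') else 0) = (\<Sum>q'\<in>S. if q' = q then lookup f mon else 0)"
      using assms(2) q by (intro sum.cong) (auto dest: inj_onD)
    then show ?thesis
      using assms(1) q by (simp add: lookup_sum_monomials)
  next
    case False
    then have "lookup f mon = 0"
      using assms(3) by (auto simp: in_keys_iff)
    moreover have "(\<Sum>q'\<in>S. if M q' = mon then lookup f (M q') else 0) = 0"
      using False by (intro sum.neutral) auto
    ultimately show ?thesis
      by (simp add: lookup_sum_monomials)
  qed
qed

definition ymonom :: "nat \<Rightarrow> nat \<Rightarrow> monom" where
  "ymonom j q = single Y0 (j - q) + single Y1 q"

definition ymonomial :: "nat \<Rightarrow> nat \<Rightarrow> 'k::comm_ring_1 bipoly" where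
  "ymonomial j q = single (ymonom j q) 1"

definition bimonom :: "nat \<Rightarrow> nat \<Rightarrow> nat \<times> nat \<Rightarrow> monom" where
  "bimonom i j pq = single X0 (i - fst pq) + single X1 (fst pq) + single Y0 (j - snd pq) + single Y1 (snd pq)"

lemma inj_on_ymonom: "inj_on (ymonom j) {..j}"
proof (rule inj_onI)
  fix q q'
  assume "ymonom j q = ymonom j q'"
  then have "lookup (ymonom j q) Y1 = lookup (ymonom j q') Y1"
    by simp
  then show "q = q'"
    by (simp add: ymonom_def lookup_add lookup_single)
qed

lemma inj_on_bimonom: "inj_on (bimonom i j) ({..i} \<times> {..j})"
proof (rule inj_onI)
  fix x y
  assume "bimonom i j x = bimonom i j y"
  then have "lookup (bimonom i j x) X1 = lookup (bimonom i j y) X1"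
    and "lookup (bimonom i j x) Y1 = lookup (bimonom i j y) Y1"
    by simp_all
  then show "x = y"
    by (simp add: bimonom_def lookup_add lookup_single prod_eq_iff)
qed

lemma bihom_ymonomial: "q \<le> j \<Longrightarrow> ymonomial j q \<in> bihom 0 j"
  by (simp add: ymonomial_def ymonom_def bihom_iff deg_x_def deg_y_def lookup_add lookup_single)

lemma keys_bihom_0: "f \<in> bihom 0 j \<Longrightarrow> keys f \<subseteq> ymonom j ` {..j}"
proof
  fix mon
  assume "f \<in> bihom 0 j" "mon \<in> keys f"
  then have "lookup mon X0 = 0" "lookup mon X1 = 0" "lookup mon Y0 + lookup mon Y1 = j"
    by (auto simp: bihom_iff deg_x_def deg_y_def)
  then have "mon = ymonom j (lookup mon Y1)"
    by (intro poly_mapping_eqI, rename_tac v, case_tac v) (auto simp: ymonom_def lookup_add lookup_single)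
  moreover have "lookup mon Y1 \<le> j"
    using \<open>lookup mon Y0 + lookup mon Y1 = j\<close> by simp
  ultimately show "mon \<in> ymonom j ` {..j}"
    by blast
qed

lemma keys_bihom: "f \<in> bihom i j \<Longrightarrow> keys f \<subseteq> bimonom i j ` ({..i} \<times> {..j})"
proof
  fix mon
  assume "f \<in> bihom i j" "mon \<in> keys f"
  then have "lookup mon X0 + lookup mon X1 = i" "lookup mon Y0 + lookup mon Y1 = j"
    by (auto simp: bihom_iff deg_x_def deg_y_def)
  then have "mon = bimonom i j (lookup mon X1, lookup mon Y1)"
    by (intro poly_mapping_eqI, rename_tac v, case_tac v) (auto simp: bimonom_def lookup_add lookup_single)
  moreover have "(lookup mon X1, lookup mon Y1) \<in> {..i} \<times> {..j}"
    using \<open>lookup mon X0 + lookup mon X1 = i\<close> \<open>lookup mon Y0 + lookup mon Y1 = j\<close> by simp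
  ultimately show "mon \<in> bimonom i j ` ({..i} \<times> {..j})"
    by blast
qed

lemma indep_family_ymonomial: "indep_family {..j} (ymonomial j :: nat \<Rightarrow> 'k::field bipoly)"
  unfolding ymonomial_def by (rule indep_family_monomials[OF _ inj_on_ymonom]) simp

lemma bihom_0_eq_sum_ymonomial:
  "f \<in> bihom 0 j \<Longrightarrow> \<exists>c. f = (\<Sum>q\<le>j. pconst (c q) * ymonomial j q :: 'k::comm_ring_1 bipoly)"
  unfolding ymonomial_def
  by (rule exI, rule eq_sum_monomials[OF _ inj_on_ymonom keys_bihom_0]) auto

lemma y_only_sum_ymonomial: "y_only (\<Sum>q\<in>S. pconst (c q) * ymonomial j q)"
  by (intro y_only_sum y_only_mult y_only_pconst)
    (simp add: ymonomial_def ymonom_def y_only_def lookup_add lookup_single)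

lemma bihom_sum_ymonomial: "(\<Sum>q\<le>j. pconst (c q) * ymonomial j q) \<in> bihom 0 j"
  by (intro bihom_sum bihom_pconst_mult bihom_ymonomial) simp

lemma basis_family_bihom:
  "basis_family (bihom i j :: 'k::field bipoly set) ({..i} \<times> {..j}) (\<lambda>pq. single (bimonom i j pq) 1)"
  unfolding basis_family_def
proof (intro conjI ballI)
  show "indep_family ({..i} \<times> {..j}) (\<lambda>pq. single (bimonom i j pq) 1 :: 'k bipoly)"
    by (rule indep_family_monomials[OF _ inj_on_bimonom]) simp
  show "(\<lambda>pq. single (bimonom i j pq) 1) ` ({..i} \<times> {..j}) \<subseteq> (bihom i j :: 'k bipoly set)"
    by (auto simp: bimonom_def bihom_iff deg_x_def deg_y_def lookup_add lookup_single)
  fix v :: "'k bipoly"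
  assume "v \<in> bihom i j"
  then show "\<exists>c. v = (\<Sum>pq\<in>{..i} \<times> {..j}. pconst (c pq) * single (bimonom i j pq) 1)"
    by (intro exI[of _ "\<lambda>pq. lookup v (bimonom i j pq)"] eq_sum_monomials[OF _ inj_on_bimonom keys_bihom])
      auto
qed simp

lemma dim_bihom: "kspace.dim (bihom i j :: 'k::field bipoly set) = (i + 1) * (j + 1)"
  using basis_family_dim[OF basis_family_bihom] by simp

definition bihom_part :: "nat \<Rightarrow> nat \<Rightarrow> 'k::comm_ring_1 bipoly \<Rightarrow> 'k bipoly" where
  "bihom_part i j f = Abs_poly_mapping (\<lambda>mon. if deg_x mon = i \<and> deg_y mon = j then lookup f mon else 0)"

lemma lookup_bihom_part:
  "lookup (bihom_part i j f) mon = (if deg_x mon = i \<and> deg_y mon = j then lookup f mon else 0)"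
proof -
  have "finite {mon. (if deg_x mon = i \<and> deg_y mon = j then lookup f mon else 0) \<noteq> 0}"
    by (rule finite_subset[of _ "keys f"]) (auto simp: in_keys_iff)
  then show ?thesis
    unfolding bihom_part_def by simp
qed

lemma bihom_part_bihom: "bihom_part i j f \<in> bihom i j"
  by (auto simp: bihom_iff in_keys_iff lookup_bihom_part split: if_splits)

lemma bihom_part_add: "bihom_part i j (f + g) = bihom_part i j f + bihom_part i j g"
  by (rule poly_mapping_eqI) (simp add: lookup_bihom_part lookup_add)

lemma bihom_part_0 [simp]: "bihom_part i j 0 = 0"
  by (rule poly_mapping_eqI) (simp add: lookup_bihom_part)

lemma bihom_part_sum: "bihom_part i j (sum f S) = (\<Sum>x\<in>S. bihom_part i j (f x))"
  by (induct S rule: infinite_finite_induct) (auto simp: bihom_part_add)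

lemma bihom_part_of_bihom: "f \<in> bihom a b \<Longrightarrow> bihom_part i j f = (if i = a \<and> j = b then f else 0)"
  by (rule poly_mapping_eqI) (auto simp: lookup_bihom_part bihom_iff in_keys_iff)

definition bidegrees :: "'k::comm_ring_1 bipoly \<Rightarrow> (nat \<times> nat) set" where
  "bidegrees f = (\<lambda>mon. (deg_x mon, deg_y mon)) ` keys f"

lemma finite_bidegrees [simp]: "finite (bidegrees f)"
  by (simp add: bidegrees_def)

lemma bihom_part_eq_0: "(i, j) \<notin> bidegrees f \<Longrightarrow> bihom_part i j f = 0"
  by (rule poly_mapping_eqI) (auto simp: lookup_bihom_part bidegrees_def in_keys_iff image_iff)

lemma sum_bihom_parts: "f = (\<Sum>ij\<in>bidegrees f. bihom_part (fst ij) (snd ij) f)"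
proof (rule poly_mapping_eqI)
  fix mon
  have "lookup (\<Sum>ij\<in>bidegrees f. bihom_part (fst ij) (snd ij) f) mon =
      (\<Sum>ij\<in>bidegrees f. if ij = (deg_x mon, deg_y mon) then lookup f mon else 0)"
    by (simp add: lookup_sum lookup_bihom_part prod_eq_iff eq_commute conj_commute)
  also have "\<dots> = lookup f mon"
    by (auto simp: bidegrees_def in_keys_iff)
  finally show "lookup f mon = lookup (\<Sum>ij\<in>bidegrees f. bihom_part (fst ij) (snd ij) f) mon"
    by simp
qed

lemma bihom_mult_eq_mult_bihom_part:
  fixes P :: "'k::comm_ring_1 bipoly"
  assumes "P \<in> bihom 0 d" and "P * s \<in> bihom 0 j"
  shows "P * s = (if d \<le> j then P * bihom_part 0 (j - d) s else 0)"
proof -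
  have "P * s = bihom_part 0 j (P * s)"
    using bihom_part_of_bihom[OF assms(2)] by simp
  also have "\<dots> = bihom_part 0 j (\<Sum>ij\<in>bidegrees s. P * bihom_part (fst ij) (snd ij) s)"
    by (subst sum_bihom_parts[of s]) (simp add: sum_distrib_left)
  also have "\<dots> = (\<Sum>ij\<in>bidegrees s. if ij = (0, j - d) \<and> d \<le> j then P * bihom_part 0 (j - d) s else 0)"
    unfolding bihom_part_sum
  proof (intro sum.cong refl)
    fix ij
    have "P * bihom_part (fst ij) (snd ij) s \<in> bihom (0 + fst ij) (d + snd ij)"
      by (rule bihom_mult[OF assms(1) bihom_part_bihom])
    then show "bihom_part 0 j (P * bihom_part (fst ij) (snd ij) s) =
        (if ij = (0, j - d) \<and> d \<le> j then P * bihom_part 0 (j - d) s else 0)"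
      by (cases ij) (auto simp: bihom_part_of_bihom)
  qed
  also have "\<dots> = (if d \<le> j then P * bihom_part 0 (j - d) s else 0)"
    by (cases "(0, j - d) \<in> bidegrees s") (auto simp: bihom_part_eq_0)
  finally show ?thesis .
qed

lemma row_l_ge: "j < t \<Longrightarrow> m i j \<le> row_l t m i"
  unfolding row_l_def by (rule Max_ge) auto

locale fat_points =
  fixes r t :: nat and R Q :: "nat \<Rightarrow> 'k::field \<times> 'k" and m :: "nat \<Rightarrow> nat \<Rightarrow> nat"
  assumes data: "fat_point_data r t R Q m"
begin

lemma proj_pt_R: "i < r \<Longrightarrow> proj_pt (R i)"
  and proj_pt_Q: "j < t \<Longrightarrow> proj_pt (Q j)"
  and proj_distinct_R: "i < r \<Longrightarrow> i' < r \<Longrightarrow> i \<noteq> i' \<Longrightarrow> proj_distinct (R i) (R i')"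
  and proj_distinct_Q: "j < t \<Longrightarrow> j' < t \<Longrightarrow> j \<noteq> j' \<Longrightarrow> proj_distinct (Q j) (Q j')"
  using data by (simp_all add: fat_point_data_def)

lemma row_l_pos: "i < r \<Longrightarrow> 0 < row_l t m i"
  using data row_l_ge[of _ t m i] unfolding fat_point_data_def by (metis gr0I le_zero_eq)

text \<open>The pairs \<open>(i, k)\<close> with \<open>k < l\<^sub>i\<close> index the entries \<open>a\<^sub>i\<^sub>,\<^sub>k\<close> of \<open>\<alpha>\<^sub>Z\<close>.\<close>

definition alpha_idx :: "(nat \<times> nat) set" where
  "alpha_idx = Sigma {..<r} (\<lambda>i. {..<row_l t m i})"

definition alpha_entry :: "nat \<times> nat \<Rightarrow> nat" where
  "alpha_entry ia = (\<Sum>j<t. m (fst ia) j - snd ia)"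

definition len_alpha :: nat where
  "len_alpha = (\<Sum>i<r. row_l t m i)"

lemma finite_alpha_idx [simp]: "finite alpha_idx"
  by (simp add: alpha_idx_def)

lemma card_alpha_idx: "card alpha_idx = len_alpha"
  by (simp add: alpha_idx_def len_alpha_def card_SigmaI)

lemma len_alpha_pos: "0 < r \<Longrightarrow> 0 < len_alpha"
  using row_l_pos[of 0] unfolding len_alpha_def by (meson finite_lessThan lessThan_iff sum_pos2 zero_le)

lemma alpha_idxE:
  assumes "ia \<in> alpha_idx"
  obtains i a where "ia = (i, a)" and "i < r" and "a < row_l t m i"
  using assms by (cases ia) (auto simp: alpha_idx_def)

text \<open>\<^term>\<open>xform (i, a)\<close> and \<^term>\<open>yform (i, a)\<close> are the forms \<open>g\<^sub>i\<^sub>,\<^sub>a\<close> and \<open>P\<^sub>i\<^sub>,\<^sub>a\<close> of the proof idea.\<close>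

definition cofactor :: "nat \<Rightarrow> 'k bipoly" where
  "cofactor i = (\<Prod>i'\<in>{..<r} - {i}. lx (R i') ^ row_l t m i')"

definition xweight :: "nat \<Rightarrow> nat \<Rightarrow> 'k bipoly" where
  "xweight i a = lx_other (R i) ^ (row_l t m i - 1 - a) * cofactor i"

definition xform :: "nat \<times> nat \<Rightarrow> 'k bipoly" where
  "xform ia = lx (R (fst ia)) ^ snd ia * xweight (fst ia) (snd ia)"

definition yform :: "nat \<times> nat \<Rightarrow> 'k bipoly" where
  "yform ia = (\<Prod>j<t. ly (Q j) ^ (m (fst ia) j - snd ia))"

lemma x_only_xweight: "x_only (xweight i a)"
  unfolding xweight_def cofactor_def
  by (intro x_only_mult x_only_power x_only_prod x_only_lx x_only_lx_other)

lemma not_lx_dvd_cofactor: "i < r \<Longrightarrow> \<not> lx (R i) dvd cofactor i"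
  unfolding cofactor_def
  by (intro not_prime_elem_dvd_prod not_prime_elem_dvd_power prime_elem_lx proj_pt_R not_lx_dvd_lx
      proj_distinct_R) auto

lemma not_lx_dvd_xweight: "i < r \<Longrightarrow> \<not> lx (R i) dvd xweight i a"
  unfolding xweight_def
  by (intro not_prime_elem_dvd_mult not_prime_elem_dvd_power prime_elem_lx proj_pt_R not_lx_dvd_lx_other
      not_lx_dvd_cofactor)

lemma lx_power_dvd_cofactor: "i' \<noteq> i \<Longrightarrow> i < r \<Longrightarrow> lx (R i) ^ row_l t m i dvd cofactor i'"
  unfolding cofactor_def by (rule dvd_prodI) auto

lemma lx_power_dvd_xform: "i' \<noteq> i \<Longrightarrow> i < r \<Longrightarrow> lx (R i) ^ row_l t m i dvd xform (i', a)"
  by (simp add: xform_def xweight_def dvd_mult lx_power_dvd_cofactor)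

lemma bihom_xform:
  assumes "ia \<in> alpha_idx"
  shows "xform ia \<in> bihom (len_alpha - 1) 0"
proof -
  obtain i a where ia: "ia = (i, a)" "i < r" "a < row_l t m i"
    using assms by (rule alpha_idxE)
  let ?d = "\<Sum>i'\<in>{..<r} - {i}. row_l t m i'"
  have "cofactor i \<in> bihom (\<Sum>i'\<in>{..<r} - {i}. row_l t m i' * 1) (\<Sum>i'\<in>{..<r} - {i}. row_l t m i' * 0)"
    unfolding cofactor_def by (intro bihom_prod bihom_power bihom_lx)
  then have "xform ia \<in> bihom (a * 1 + ((row_l t m i - 1 - a) * 1 + ?d)) (a * 0 + ((row_l t m i - 1 - a) * 0 + 0))"
    unfolding xform_def xweight_def ia fst_conv snd_conv
    by (intro bihom_mult bihom_power bihom_lx bihom_lx_other) simp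
  moreover have "len_alpha = row_l t m i + ?d"
    unfolding len_alpha_def using ia(2) by (simp add: sum.remove)
  ultimately show ?thesis
    using ia(3) by simp
qed

lemma xform_combination_expansion:
  assumes "i < r"
  obtains G where "(\<Sum>ia\<in>alpha_idx. xform ia * T ia) =
    (\<Sum>a<row_l t m i. lx (R i) ^ a * xweight i a * T (i, a)) + lx (R i) ^ row_l t m i * G"
proof -
  have "(\<Sum>ia\<in>alpha_idx. xform ia * T ia) = (\<Sum>i'<r. \<Sum>a<row_l t m i'. xform (i', a) * T (i', a))"
    unfolding alpha_idx_def by (simp add: sum.Sigma)
  also have "\<dots> = (\<Sum>a<row_l t m i. xform (i, a) * T (i, a))
      + (\<Sum>i'\<in>{..<r} - {i}. \<Sum>a<row_l t m i'. xform (i', a) * T (i', a))"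
    using assms by (simp add: sum.remove)
  finally have "(\<Sum>ia\<in>alpha_idx. xform ia * T ia) =
      (\<Sum>a<row_l t m i. lx (R i) ^ a * xweight i a * T (i, a))
      + (\<Sum>i'\<in>{..<r} - {i}. \<Sum>a<row_l t m i'. xform (i', a) * T (i', a))"
    by (simp add: xform_def)
  moreover have "lx (R i) ^ row_l t m i dvd (\<Sum>i'\<in>{..<r} - {i}. \<Sum>a<row_l t m i'. xform (i', a) * T (i', a))"
    using assms lx_power_dvd_xform by (auto intro!: dvd_sum dvd_mult2)
  ultimately show ?thesis
    using that by (auto elim!: dvdE)
qed

lemma xform_combination_eq_0:
  assumes "\<forall>ia\<in>alpha_idx. y_only (T ia)" and "(\<Sum>ia\<in>alpha_idx. xform ia * T ia) = 0"
    and "ia \<in> alpha_idx"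
  shows "T ia = 0"
proof -
  obtain i a where ia: "ia = (i, a)" "i < r" "a < row_l t m i"
    using assms(3) by (rule alpha_idxE)
  obtain G where "(\<Sum>ia\<in>alpha_idx. xform ia * T ia) =
      (\<Sum>a<row_l t m i. lx (R i) ^ a * xweight i a * T (i, a)) + lx (R i) ^ row_l t m i * G"
    using xform_combination_expansion[OF ia(2)] .
  with assms(1,2) ia(2) have "\<forall>a<row_l t m i. T (i, a) = 0"
    by (intro lx_expansion_eq_0[OF proj_pt_R[OF ia(2)]])
      (auto simp: x_only_xweight not_lx_dvd_xweight alpha_idx_def)
  with ia show ?thesis
    by simp
qed

lemma xform_combination_in_pair_ideal_pow:
  assumes "\<forall>ia\<in>alpha_idx. y_only (T ia)" and "i < r" and "j < t"
    and "(\<Sum>ia\<in>alpha_idx. xform ia * T ia) \<in> pair_ideal_pow (lx (R i)) (ly (Q j)) (m i j)"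
  shows "\<forall>a<m i j. ly (Q j) ^ (m i j - a) dvd T (i, a)"
proof -
  obtain G where "(\<Sum>ia\<in>alpha_idx. xform ia * T ia) =
      (\<Sum>a<row_l t m i. lx (R i) ^ a * xweight i a * T (i, a)) + lx (R i) ^ row_l t m i * G"
    using xform_combination_expansion[OF assms(2)] .
  with assms show ?thesis
    by (intro lx_expansion_in_pair_ideal_pow[OF proj_pt_R[OF assms(2)] proj_pt_Q[OF assms(3)]])
      (auto simp: x_only_xweight not_lx_dvd_xweight alpha_idx_def row_l_ge)
qed

lemma yform_neq_0: "yform ia \<noteq> 0"
  unfolding yform_def using ly_neq_0[OF proj_pt_Q] by simp

lemma bihom_yform: "yform ia \<in> bihom 0 (alpha_entry ia)"
proof -
  have "yform ia \<in> bihom (\<Sum>j<t. (m (fst ia) j - snd ia) * 0) (\<Sum>j<t. (m (fst ia) j - snd ia) * 1)"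
    unfolding yform_def by (intro bihom_prod bihom_power bihom_ly)
  then show ?thesis
    by (simp add: alpha_entry_def)
qed

lemma y_only_yform: "y_only (yform ia)"
  by (rule bihom_y_only[OF bihom_yform])

lemma yform_dvd:
  assumes "\<forall>j<t. ly (Q j) ^ (m i j - a) dvd T"
  shows "yform (i, a) dvd T"
  unfolding yform_def fst_conv snd_conv
  using assms prime_elem_ly[OF proj_pt_Q] not_ly_dvd_ly[OF proj_pt_Q proj_distinct_Q]
  by (intro prod_prime_powers_dvd) auto

lemma xform_yform_in_pair_ideal_pow:
  assumes "ia \<in> alpha_idx" and "i' < r" and "j' < t"
  shows "xform ia * yform ia * h \<in> pair_ideal_pow (lx (R i')) (ly (Q j')) (m i' j')"
proof -
  obtain i a where ia: "ia = (i, a)" "i < r" "a < row_l t m i"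
    using assms(1) by (rule alpha_idxE)
  have "lx (R i) ^ a dvd xform (i, a)"
    by (simp add: xform_def)
  show ?thesis
  proof (cases "i' = i")
    case False
    have "lx (R i') ^ m i' j' dvd lx (R i') ^ row_l t m i'"
      using row_l_ge[OF assms(3)] by (rule le_imp_power_dvd)
    also have "\<dots> dvd xform (i, a)"
      using lx_power_dvd_xform[OF _ assms(2)] False by simp
    finally show ?thesis
      using ia by (intro pair_ideal_pow_dvd[of "m i' j'"]) (auto intro: dvd_mult2)
  next
    case True
    show ?thesis
    proof (cases "m i j' \<le> a")
      case True
      then have "lx (R i) ^ m i j' dvd xform (i, a)"
        using \<open>lx (R i) ^ a dvd xform (i, a)\<close> le_imp_power_dvd dvd_trans by blast
      then show ?thesis
        using ia \<open>i' = i\<close> by (intro pair_ideal_pow_dvd[of "m i j'"]) (auto intro: dvd_mult2)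
    next
      case False
      have "ly (Q j') ^ (m i j' - a) dvd yform (i, a)"
        unfolding yform_def fst_conv snd_conv by (rule dvd_prodI) (use assms(3) in auto)
      with \<open>lx (R i) ^ a dvd xform (i, a)\<close>
      have "lx (R i) ^ a * ly (Q j') ^ (m i j' - a) dvd xform ia * yform ia * h"
        using ia by (auto intro: mult_dvd_mono dvd_mult2)
      then show ?thesis
        using False \<open>i' = i\<close> by (intro pair_ideal_pow_dvd[of a]) auto
    qed
  qed
qed

subsection \<open>The ideal in bidegree \<open>(|\<alpha>\<^sub>Z| - 1, j)\<close>\<close>

lemma basis_family_bihom_last_row:
  assumes "0 < r"
  shows "basis_family (bihom (len_alpha - 1) j) (alpha_idx \<times> {..j})
    (\<lambda>iq. xform (fst iq) * ymonomial j (snd iq))"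
proof (rule basis_family_if_card_eq[OF _ _ _ basis_family_bihom])
  show "finite (alpha_idx \<times> {..j})"
    by simp
  show "card (alpha_idx \<times> {..j}) = card ({..len_alpha - 1} \<times> {..j})"
    using len_alpha_pos[OF assms] by (simp add: card_cartesian_product card_alpha_idx)
  have "xform ia * ymonomial j q \<in> bihom (len_alpha - 1 + 0) (0 + j)" if "ia \<in> alpha_idx" "q \<le> j" for ia q
    using that by (intro bihom_mult bihom_xform bihom_ymonomial)
  then show "(\<lambda>iq. xform (fst iq) * ymonomial j (snd iq)) ` (alpha_idx \<times> {..j}) \<subseteq> bihom (len_alpha - 1) j"
    by auto
  show "indep_family (alpha_idx \<times> {..j}) (\<lambda>iq. xform (fst iq) * ymonomial j (snd iq))"
    unfolding indep_family_def
  proof (intro allI impI ballI)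
    fix c iq
    assume "(\<Sum>iq\<in>alpha_idx \<times> {..j}. pconst (c iq) * (xform (fst iq) * ymonomial j (snd iq))) = 0"
      and iq: "iq \<in> alpha_idx \<times> {..j}"
    then have "(\<Sum>ia\<in>alpha_idx. xform ia * (\<Sum>q\<le>j. pconst (c (ia, q)) * ymonomial j q)) = 0"
      using sum_Sigma_pconst_mult[of alpha_idx "\<lambda>_. {..j}" c xform "\<lambda>_ q. ymonomial j q"] by simp
    moreover have "\<forall>ia\<in>alpha_idx. y_only (\<Sum>q\<le>j. pconst (c (ia, q)) * ymonomial j q)"
      by (simp add: y_only_sum_ymonomial)
    ultimately have "(\<Sum>q\<le>j. pconst (c (fst iq, q)) * ymonomial j q) = 0"
      using iq by (intro xform_combination_eq_0[of "\<lambda>ia. \<Sum>q\<le>j. pconst (c (ia, q)) * ymonomial j q"]) auto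
    then show "c iq = 0"
      using iq indep_familyD[OF indep_family_ymonomial[of j], of "\<lambda>q. c (fst iq, q)" "snd iq"] by auto
  qed
qed

lemma bihom_last_row_eq_sum_xform:
  assumes "0 < r" and "v \<in> bihom (len_alpha - 1) j"
  obtains T where "\<And>ia. T ia \<in> bihom 0 j" and "v = (\<Sum>ia\<in>alpha_idx. xform ia * T ia)"
proof -
  obtain c where "v = (\<Sum>iq\<in>alpha_idx \<times> {..j}. pconst (c iq) * (xform (fst iq) * ymonomial j (snd iq)))"
    using basis_family_bihom_last_row[OF assms(1), of j] assms(2) unfolding basis_family_def by blast
  then have "v = (\<Sum>ia\<in>alpha_idx. xform ia * (\<Sum>q\<le>j. pconst (c (ia, q)) * ymonomial j q))"
    using sum_Sigma_pconst_mult[of alpha_idx "\<lambda>_. {..j}" c xform "\<lambda>_ q. ymonomial j q"] by simp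
  then show ?thesis
    by (rule that[OF bihom_sum_ymonomial])
qed

lemma yform_dvd_coeff:
  assumes "\<forall>ia\<in>alpha_idx. y_only (T ia)" and "(\<Sum>ia\<in>alpha_idx. xform ia * T ia) \<in> fat_ideal r t R Q m"
    and "ia \<in> alpha_idx"
  shows "yform ia dvd T ia"
proof -
  obtain i a where ia: "ia = (i, a)" "i < r"
    using assms(3) by (rule alpha_idxE)
  have "ly (Q j) ^ (m i j - a) dvd T (i, a)" if "j < t" for j
  proof (cases "a < m i j")
    case True
    with assms(2) ia(2) that have "(\<Sum>ia\<in>alpha_idx. xform ia * T ia) \<in> pair_ideal_pow (lx (R i)) (ly (Q j)) (m i j)"
      by (simp add: mem_fat_ideal_iff)
    with True show ?thesis
      using xform_combination_in_pair_ideal_pow[OF assms(1) ia(2) that] by blast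
  qed simp
  then show ?thesis
    using ia(1) yform_dvd by blast
qed

lemma bihom_multiple_of_yform:
  assumes "T \<in> bihom 0 j" and "yform ia dvd T"
  obtains d where "T = (if alpha_entry ia \<le> j
    then yform ia * (\<Sum>q\<le>j - alpha_entry ia. pconst (d q) * ymonomial (j - alpha_entry ia) q) else 0)"
proof -
  obtain s where s: "T = yform ia * s"
    using assms(2) ..
  have "yform ia * s = (if alpha_entry ia \<le> j then yform ia * bihom_part 0 (j - alpha_entry ia) s else 0)"
    by (rule bihom_mult_eq_mult_bihom_part[OF bihom_yform]) (use assms(1) s in simp)
  with s have T: "T = (if alpha_entry ia \<le> j then yform ia * bihom_part 0 (j - alpha_entry ia) s else 0)"
    by simp
  obtain d where "bihom_part 0 (j - alpha_entry ia) s =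
      (\<Sum>q\<le>j - alpha_entry ia. pconst (d q) * ymonomial (j - alpha_entry ia) q)"
    using bihom_0_eq_sum_ymonomial[OF bihom_part_bihom] by blast
  with T show ?thesis
    by (intro that[of d]) simp
qed

definition ideal_basis_idx :: "nat \<Rightarrow> ((nat \<times> nat) \<times> nat) set" where
  "ideal_basis_idx j = Sigma {ia \<in> alpha_idx. alpha_entry ia \<le> j} (\<lambda>ia. {..j - alpha_entry ia})"

definition ideal_basis :: "nat \<Rightarrow> (nat \<times> nat) \<times> nat \<Rightarrow> 'k bipoly" where
  "ideal_basis j iq = xform (fst iq) * yform (fst iq) * ymonomial (j - alpha_entry (fst iq)) (snd iq)"

lemma finite_ideal_basis_idx [simp]: "finite (ideal_basis_idx j)"
  by (simp add: ideal_basis_idx_def)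

lemma sum_ideal_basis:
  "(\<Sum>iq\<in>ideal_basis_idx j. pconst (c iq) * ideal_basis j iq) =
    (\<Sum>ia\<in>alpha_idx. xform ia * (if alpha_entry ia \<le> j then yform ia *
      (\<Sum>q\<le>j - alpha_entry ia. pconst (c (ia, q)) * ymonomial (j - alpha_entry ia) q) else 0))"
proof -
  have "(\<Sum>iq\<in>ideal_basis_idx j. pconst (c iq) * ideal_basis j iq) =
      (\<Sum>ia\<in>{ia \<in> alpha_idx. alpha_entry ia \<le> j}. (xform ia * yform ia) *
        (\<Sum>q\<le>j - alpha_entry ia. pconst (c (ia, q)) * ymonomial (j - alpha_entry ia) q))"
    unfolding ideal_basis_idx_def ideal_basis_def by (subst sum_Sigma_pconst_mult) auto
  also have "\<dots> = (\<Sum>ia\<in>alpha_idx. xform ia * (if alpha_entry ia \<le> j then yform ia *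
      (\<Sum>q\<le>j - alpha_entry ia. pconst (c (ia, q)) * ymonomial (j - alpha_entry ia) q) else 0))"
    by (simp add: sum.inter_filter mult.assoc if_distrib[of "\<lambda>x. xform _ * x"] cong: if_cong)
  finally show ?thesis .
qed

lemma ideal_basis_in_last_row:
  assumes "iq \<in> ideal_basis_idx j"
  shows "ideal_basis j iq \<in> fat_ideal r t R Q m \<inter> bihom (len_alpha - 1) j"
proof
  obtain ia q where iq: "iq = (ia, q)" "ia \<in> alpha_idx" "alpha_entry ia \<le> j" "q \<le> j - alpha_entry ia"
    using assms by (auto simp: ideal_basis_idx_def)
  have "ideal_basis j iq \<in> bihom (len_alpha - 1 + 0 + 0) (0 + alpha_entry ia + (j - alpha_entry ia))"
    unfolding ideal_basis_def iq fst_conv snd_conv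
    by (intro bihom_mult bihom_xform bihom_yform bihom_ymonomial iq)
  then show "ideal_basis j iq \<in> bihom (len_alpha - 1) j"
    using iq(3) by simp
  show "ideal_basis j iq \<in> fat_ideal r t R Q m"
    unfolding mem_fat_ideal_iff ideal_basis_def iq fst_conv snd_conv
    using iq(2) by (auto intro!: xform_yform_in_pair_ideal_pow)
qed

lemma indep_family_ideal_basis: "indep_family (ideal_basis_idx j) (ideal_basis j)"
  unfolding indep_family_def
proof (intro allI impI ballI)
  fix c iq
  assume sum0: "(\<Sum>iq\<in>ideal_basis_idx j. pconst (c iq) * ideal_basis j iq) = 0"
    and iq: "iq \<in> ideal_basis_idx j"
  obtain ia q where iq': "iq = (ia, q)" "ia \<in> alpha_idx" "alpha_entry ia \<le> j" "q \<le> j - alpha_entry ia"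
    using iq by (auto simp: ideal_basis_idx_def)
  define T where "T ia = (if alpha_entry ia \<le> j then yform ia *
      (\<Sum>q\<le>j - alpha_entry ia. pconst (c (ia, q)) * ymonomial (j - alpha_entry ia) q) else 0)" for ia
  have "\<forall>ia\<in>alpha_idx. y_only (T ia)"
    by (auto simp: T_def intro!: y_only_mult y_only_yform y_only_sum_ymonomial)
  moreover have "(\<Sum>ia\<in>alpha_idx. xform ia * T ia) = 0"
    using sum0 by (simp add: sum_ideal_basis T_def)
  ultimately have "T ia = 0"
    using iq'(2) by (rule xform_combination_eq_0)
  then have "(\<Sum>q\<le>j - alpha_entry ia. pconst (c (ia, q)) * ymonomial (j - alpha_entry ia) q) = 0"
    using iq'(3) yform_neq_0[of ia] by (simp add: T_def)
  then show "c iq = 0"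
    using iq' indep_familyD[OF indep_family_ymonomial[of "j - alpha_entry ia"], of "\<lambda>q. c (ia, q)" q] by auto
qed

lemma last_row_eq_sum_ideal_basis:
  assumes "0 < r" and v: "v \<in> fat_ideal r t R Q m \<inter> bihom (len_alpha - 1) j"
  shows "\<exists>c. v = (\<Sum>iq\<in>ideal_basis_idx j. pconst (c iq) * ideal_basis j iq)"
proof -
  obtain T where T: "\<And>ia. T ia \<in> bihom 0 j" and vT: "v = (\<Sum>ia\<in>alpha_idx. xform ia * T ia)"
    using bihom_last_row_eq_sum_xform[OF assms(1)] v by blast
  have dvd: "yform ia dvd T ia" if "ia \<in> alpha_idx" for ia
    using that v T by (intro yform_dvd_coeff) (auto simp: vT[symmetric] intro: bihom_y_only)
  have "\<exists>d. T ia = (if alpha_entry ia \<le> j then yform ia *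
      (\<Sum>q\<le>j - alpha_entry ia. pconst (d q) * ymonomial (j - alpha_entry ia) q) else 0)"
    if "ia \<in> alpha_idx" for ia
    using bihom_multiple_of_yform[OF T dvd[OF that]] by blast
  then have "\<forall>ia\<in>alpha_idx. \<exists>d. T ia = (if alpha_entry ia \<le> j then yform ia *
      (\<Sum>q\<le>j - alpha_entry ia. pconst (d q) * ymonomial (j - alpha_entry ia) q) else 0)"
    by blast
  from bchoice[OF this] obtain D where D: "\<forall>ia\<in>alpha_idx. T ia = (if alpha_entry ia \<le> j then yform ia *
      (\<Sum>q\<le>j - alpha_entry ia. pconst (D ia q) * ymonomial (j - alpha_entry ia) q) else 0)"
    by blast
  have "v = (\<Sum>iq\<in>ideal_basis_idx j. pconst (D (fst iq) (snd iq)) * ideal_basis j iq)"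
    unfolding vT sum_ideal_basis by (intro sum.cong refl) (simp add: D)
  then show ?thesis
    by (rule exI[of _ "\<lambda>iq. D (fst iq) (snd iq)"])
qed

lemma basis_family_ideal_last_row:
  assumes "0 < r"
  shows "basis_family (fat_ideal r t R Q m \<inter> bihom (len_alpha - 1) j) (ideal_basis_idx j) (ideal_basis j)"
  unfolding basis_family_def
  using indep_family_ideal_basis ideal_basis_in_last_row last_row_eq_sum_ideal_basis[OF assms]
  by auto

lemma dim_ideal_last_row:
  assumes "0 < r"
  shows "kspace.dim (fat_ideal r t R Q m \<inter> bihom (len_alpha - 1) j) = (\<Sum>ia\<in>alpha_idx. (j + 1) - alpha_entry ia)"
proof -
  have "kspace.dim (fat_ideal r t R Q m \<inter> bihom (len_alpha - 1) j) = card (ideal_basis_idx j)"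
    by (rule basis_family_dim[OF basis_family_ideal_last_row[OF assms]])
  also have "\<dots> = (\<Sum>ia\<in>{ia \<in> alpha_idx. alpha_entry ia \<le> j}. j - alpha_entry ia + 1)"
    by (simp add: ideal_basis_idx_def card_SigmaI)
  also have "\<dots> = (\<Sum>ia\<in>alpha_idx. (j + 1) - alpha_entry ia)"
    by (simp add: sum.inter_filter) (intro sum.cong refl, auto)
  finally show ?thesis .
qed

end

subsection \<open>Column sums of the first difference\<close>

lemma length_filter_rev_sort: "length (filter P (rev (sort xs))) = length (filter P xs)"
proof -
  have "mset (filter P (sort xs)) = mset (filter P xs)"
    by (simp add: mset_filter)
  then show ?thesis
    by (simp add: rev_filter[symmetric] mset_eq_length)
qed

lemma length_filter_concat_upt:
  "length (filter P (concat (map (\<lambda>i. map (f i) [0..<L i]) [0..<r]))) =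
     card {ia \<in> Sigma {..<r} (\<lambda>i. {..<L i}). P (f (fst ia) (snd ia))}"
proof -
  have "{ia \<in> Sigma {..<r} (\<lambda>i. {..<L i}). P (f (fst ia) (snd ia))} =
      Sigma {..<r} (\<lambda>i. {k. k < L i \<and> P (f i k)})"
    by auto
  moreover have "card {k. k < L i \<and> P (map (f i) [0..<L i] ! k)} = card {k. k < L i \<and> P (f i k)}" for i
    by (rule arg_cong[where f = card]) auto
  ultimately show ?thesis
    by (simp add: filter_concat length_concat comp_def length_filter_conv_card card_SigmaI
        interv_sum_list_conv_sum_set_nat atLeast0LessThan)
qed

lemma alpha_eq:
  "alpha r t m = rev (sort (concat (map (\<lambda>i. map (\<lambda>k. \<Sum>j<t. m i j - k) [0..<row_l t m i]) [0..<r])))"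
  unfolding alpha_def by (simp only: concat_map_singleton)

lemma sum_delta_hilb_column:
  "(\<Sum>h<n. delta_hilb r t R Q m (int h) y) =
     hilb r t R Q m (int n - 1) y - hilb r t R Q m (int n - 1) (y - 1)"
proof -
  define f where "f k = hilb r t R Q m (int k - 1) y - hilb r t R Q m (int k - 1) (y - 1)" for k
  have "delta_hilb r t R Q m (int h) y = f (Suc h) - f h" for h
    by (simp add: f_def delta_hilb_def)
  then have "(\<Sum>h<n. delta_hilb r t R Q m (int h) y) = f n - f 0"
    by (simp add: sum_lessThan_telescope)
  also have "f 0 = 0"
    by (simp add: f_def hilb_def)
  finally show ?thesis
    by (simp add: f_def)
qed

context fat_points
begin

lemma length_alpha: "length (alpha r t m) = len_alpha"
  by (simp add: alpha_eq length_concat comp_def len_alpha_def interv_sum_list_conv_sum_set_nat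
      atLeast0LessThan)

lemma conj_part_alpha: "conj_part (alpha r t m) c = card {ia \<in> alpha_idx. c \<le> alpha_entry ia}"
  unfolding conj_part_def length_filter_conv_card[symmetric] alpha_eq length_filter_rev_sort
    length_filter_concat_upt
  by (simp add: alpha_idx_def alpha_entry_def)

lemma hilb_last_row:
  assumes "0 < r"
  shows "hilb r t R Q m (int (len_alpha - 1)) (int j) = (\<Sum>ia\<in>alpha_idx. int (min (j + 1) (alpha_entry ia)))"
proof -
  define N where "N = len_alpha - 1"
  have "len_alpha = N + 1"
    using len_alpha_pos[OF assms] by (simp add: N_def)
  have "hilb r t R Q m (int N) (int j) =
      int ((N + 1) * (j + 1)) - int (\<Sum>ia\<in>alpha_idx. (j + 1) - alpha_entry ia)"
    using dim_ideal_last_row[OF assms, of j, folded N_def] by (simp add: hilb_def dim_bihom)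
  also have "(N + 1) * (j + 1) = (\<Sum>ia\<in>alpha_idx. j + 1)"
    by (simp add: card_alpha_idx \<open>len_alpha = N + 1\<close>)
  also have "\<dots> = (\<Sum>ia\<in>alpha_idx. min (j + 1) (alpha_entry ia) + ((j + 1) - alpha_entry ia))"
    by (intro sum.cong refl) auto
  finally show ?thesis
    by (simp add: sum.distrib N_def)
qed

lemma hilb_last_row_pred:
  assumes "0 < r"
  shows "hilb r t R Q m (int (len_alpha - 1)) (int j - 1) = (\<Sum>ia\<in>alpha_idx. int (min j (alpha_entry ia)))"
proof (cases j)
  case 0
  then show ?thesis
    by (simp add: hilb_def)
next
  case (Suc j')
  then show ?thesis
    using hilb_last_row[OF assms, of j'] by simp
qed

lemma column_sum_delta_hilb:
  "int (conj_part (alpha r t m) (j + 1)) = (\<Sum>h < length (alpha r t m). delta_hilb r t R Q m (int h) (int j))"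
proof (cases "r = 0")
  case True
  then show ?thesis
    by (simp add: alpha_def conj_part_def)
next
  case False
  then have "0 < len_alpha"
    by (simp add: len_alpha_pos)
  then have "(\<Sum>h < length (alpha r t m). delta_hilb r t R Q m (int h) (int j)) =
      hilb r t R Q m (int (len_alpha - 1)) (int j) - hilb r t R Q m (int (len_alpha - 1)) (int j - 1)"
    by (simp add: length_alpha sum_delta_hilb_column of_nat_diff)
  also have "\<dots> = (\<Sum>ia\<in>alpha_idx. int (min (j + 1) (alpha_entry ia))) - (\<Sum>ia\<in>alpha_idx. int (min j (alpha_entry ia)))"
    using False by (simp only: hilb_last_row hilb_last_row_pred neq0_conv)
  also have "\<dots> = (\<Sum>ia\<in>alpha_idx. int (min (j + 1) (alpha_entry ia)) - int (min j (alpha_entry ia)))"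
    by (simp add: sum_subtractf)
  also have "\<dots> = (\<Sum>ia\<in>alpha_idx. if j + 1 \<le> alpha_entry ia then 1 else 0)"
    by (intro sum.cong refl) auto
  also have "\<dots> = int (card {ia \<in> alpha_idx. j + 1 \<le> alpha_entry ia})"
    by (simp add: sum.inter_filter[symmetric])
  finally show ?thesis
    by (simp add: conj_part_alpha)
qed

end

lemma swap_xy_pair_ideal_pow:
  "f \<in> pair_ideal_pow l u n \<Longrightarrow> swap_xy f \<in> pair_ideal_pow (swap_xy l) (swap_xy u) n"
  by (auto simp: pair_ideal_pow_def swap_xy_sum swap_xy_mult swap_xy_power)

lemma swap_xy_mem_pair_ideal_pow_iff:
  "swap_xy f \<in> pair_ideal_pow (lx B) (ly A) n \<longleftrightarrow> f \<in> pair_ideal_pow (lx A) (ly (B :: 'k::field \<times> 'k)) n"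
proof
  assume "swap_xy f \<in> pair_ideal_pow (lx B) (ly A) n"
  then have "f \<in> pair_ideal_pow (ly B) (lx A) n"
    using swap_xy_pair_ideal_pow by (fastforce simp: swap_xy_lx swap_xy_ly)
  then show "f \<in> pair_ideal_pow (lx A) (ly B) n"
    using pair_ideal_pow_commute by blast
next
  assume "f \<in> pair_ideal_pow (lx A) (ly B) n"
  then have "swap_xy f \<in> pair_ideal_pow (ly A) (lx B) n"
    using swap_xy_pair_ideal_pow by (fastforce simp: swap_xy_lx swap_xy_ly)
  then show "swap_xy f \<in> pair_ideal_pow (lx B) (ly A) n"
    using pair_ideal_pow_commute by blast
qed

lemma fat_point_data_transpose: "fat_point_data r t R Q m \<Longrightarrow> fat_point_data t r Q R (\<lambda>a b. m b a)"
  unfolding fat_point_data_def by blast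

lemma swap_xy_mem_fat_ideal_iff:
  "swap_xy f \<in> fat_ideal t r Q R (\<lambda>a b. m b a) \<longleftrightarrow> f \<in> fat_ideal r t R Q m"
  by (auto simp: mem_fat_ideal_iff swap_xy_mem_pair_ideal_pow_iff)

lemma swap_xy_image_fat_ideal_bihom:
  "swap_xy ` (fat_ideal r t R Q m \<inter> bihom i j) = fat_ideal t r Q R (\<lambda>a b. m b a) \<inter> bihom j i"
proof
  show "swap_xy ` (fat_ideal r t R Q m \<inter> bihom i j) \<subseteq> fat_ideal t r Q R (\<lambda>a b. m b a) \<inter> bihom j i"
    by (auto simp: swap_xy_mem_fat_ideal_iff swap_xy_bihom)
  show "fat_ideal t r Q R (\<lambda>a b. m b a) \<inter> bihom j i \<subseteq> swap_xy ` (fat_ideal r t R Q m \<inter> bihom i j)"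
  proof
    fix g
    assume "g \<in> fat_ideal t r Q R (\<lambda>a b. m b a) \<inter> bihom j i"
    then have "swap_xy g \<in> fat_ideal r t R Q m \<inter> bihom i j"
      using swap_xy_mem_fat_ideal_iff[of "swap_xy g"] swap_xy_bihom_iff[of "swap_xy g" j i] by auto
    then show "g \<in> swap_xy ` (fat_ideal r t R Q m \<inter> bihom i j)"
      by (metis swap_xy_swap_xy image_eqI)
  qed
qed

lemma linear_swap_xy: "Vector_Spaces.linear pscale pscale (swap_xy :: 'k::field bipoly \<Rightarrow> 'k bipoly)"
  by (simp add: Vector_Spaces.linear_iff kspace.vector_space_axioms swap_xy_add swap_xy_mult pscale_def)

lemma dim_swap_xy_image: "kspace.dim (swap_xy ` V) = kspace.dim (V :: 'k::field bipoly set)"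
proof -
  interpret swap: Vector_Spaces.linear pscale pscale "swap_xy :: 'k bipoly \<Rightarrow> 'k bipoly"
    by (rule linear_swap_xy)
  have inj: "inj_on (swap_xy :: 'k bipoly \<Rightarrow> 'k bipoly) S" for S
    by (rule inj_onI) simp
  obtain B where B: "B \<subseteq> V" "kspace.independent B" "V \<subseteq> kspace.span B" "card B = kspace.dim V"
    by (rule kspace.basis_exists)
  show ?thesis
  proof (rule kspace.dim_unique)
    show "swap_xy ` B \<subseteq> swap_xy ` V"
      using B(1) by auto
    show "swap_xy ` V \<subseteq> kspace.span (swap_xy ` B)"
      using B(3) by (auto simp: swap.span_image)
    show "kspace.independent (swap_xy ` B)"
      using B(2) inj by (rule swap.independent_injective_image)
    show "card (swap_xy ` B) = kspace.dim V"
      using B(4) card_image[OF inj] by simp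
  qed
qed

lemma hilb_transpose: "hilb r t R Q m i j = hilb t r Q R (\<lambda>a b. m b a) j i"
proof (cases "i < 0 \<or> j < 0")
  case False
  have "kspace.dim (fat_ideal t r Q R (\<lambda>a b. m b a) \<inter> bihom (nat j) (nat i)) =
      kspace.dim (swap_xy ` (fat_ideal r t R Q m \<inter> bihom (nat i) (nat j)))"
    by (simp only: swap_xy_image_fat_ideal_bihom)
  also have "\<dots> = kspace.dim (fat_ideal r t R Q m \<inter> bihom (nat i) (nat j))"
    by (rule dim_swap_xy_image)
  finally show ?thesis
    using False by (simp add: hilb_def dim_bihom mult.commute)
qed (auto simp: hilb_def)

lemma delta_hilb_transpose: "delta_hilb r t R Q m i j = delta_hilb t r Q R (\<lambda>a b. m b a) j i"
  unfolding delta_hilb_def hilb_transpose[of r t R Q m] by simp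

lemma beta_eq_alpha_transpose: "beta r t m = alpha t r (\<lambda>a b. m b a)"
  by (simp add: alpha_def beta_def row_l_def col_l_def)

theorem lemma4p6:
  fixes r t :: nat and R Q :: "nat \<Rightarrow> 'k::alg_closed_field \<times> 'k" and m :: "nat \<Rightarrow> nat \<Rightarrow> nat"
  assumes "fat_point_data r t R Q m"
  shows "(\<forall>j < length (beta r t m).
            int (conj_part (alpha r t m) (j + 1))
              = (\<Sum>h < length (alpha r t m). delta_hilb r t R Q m (int h) (int j)))
       \<and> (\<forall>i < length (alpha r t m).
            int (conj_part (beta r t m) (i + 1))
              = (\<Sum>h < length (beta r t m). delta_hilb r t R Q m (int i) (int h)))"
proof (intro conjI allI impI)
  interpret Z: fat_points r t R Q m
    by (rule fat_points.intro) fact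
  interpret Z': fat_points t r Q R "\<lambda>a b. m b a"
    using fat_point_data_transpose[OF assms] by (rule fat_points.intro)
  fix i j
  show "int (conj_part (alpha r t m) (j + 1)) = (\<Sum>h < length (alpha r t m). delta_hilb r t R Q m (int h) (int j))"
    by (rule Z.column_sum_delta_hilb)
  show "int (conj_part (beta r t m) (i + 1)) = (\<Sum>h < length (beta r t m). delta_hilb r t R Q m (int i) (int h))"
    unfolding beta_eq_alpha_transpose delta_hilb_transpose[of r t R Q m]
    by (rule Z'.column_sum_delta_hilb)
qed

end
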